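(* Let $0<\lambda<1$ and $0<\gamma\le\frac12$. For $n$ such that $\lambda n$ and $i=\gamma n$ are integers, let $M$ be a uniformly random $\lambda n\times n$ binary matrix, $C=\{x: Mx=0\}$, and let $N_i=N_i(C)$. Then \[ \Big|\frac1n\log_2\mathbb E N_i-\big(\psi(4,\gamma)+2h(\gamma)-3\lambda\big)\Big|=o(1)\quad(n\to\infty). \] Moreover, if $\psi(4,\gamma)>\lambda$, there is a constant $c>0$ independent of $n$ such that for all large $n$, \[ \frac1n\log_2\mathrm{Var}(N_i)\le 2\big(\psi(4,\gamma)+2h(\gamma)-3\lambda\big)-c. \]
   Context: $h(t)=t\log_2\frac1t+(1-t)\log_2\frac1{1-t}$ is the binary entropy function. $L_i=\{x\in\{0,1\}^n:|x|=i\}$. For a linear code $C$, $N_i(C)$ is the number of ordered 4-tuples $(u_1,u_2,u_3,u_4)\in(C\cap L_i)^4$ with $u_1+u_2+u_3+u_4=0$ whose entries are pairwise distinct. $\psi(4,\gamma)=\lim_{n\to\infty}\frac1n\log_2\big|\{(u_1,\dots,u_4)\in L_{\gamma n}^4: u_1+\dots+u_4=0\}\big|-2h(\gamma)$ (limit over $n$ with $\gamma n$ integer). *)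

theory Defs
  imports "HOL-Analysis.Analysis"
begin

definition h :: "real \<Rightarrow> real" where
  "h t = t * log 2 (1 / t) + (1 - t) * log 2 (1 / (1 - t))"

text \<open>Vectors of \<open>{0,1}^n\<close>: boolean functions on \<open>nat\<close> vanishing outside \<open>{0..<n}\<close>.\<close>
definition vecs :: "nat \<Rightarrow> (nat \<Rightarrow> bool) set" where
  "vecs n = {x. \<forall>j\<ge>n. \<not> x j}"

definition layer :: "nat \<Rightarrow> nat \<Rightarrow> (nat \<Rightarrow> bool) set" where
  "layer n i = {x \<in> vecs n. card {j. j < n \<and> x j} = i}"

text \<open>The four vectors sum to 0 over GF(2) (coordinatewise xor of all four is 0),
  i.e. \<open>u1 + u2 = u3 + u4\<close>.\<close>
definition sum4_zero :: "(nat \<Rightarrow> bool) \<Rightarrow> (nat \<Rightarrow> bool) \<Rightarrow> (nat \<Rightarrow> bool) \<Rightarrow> (nat \<Rightarrow> bool) \<Rightarrow> bool" where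
  "sum4_zero u1 u2 u3 u4 \<longleftrightarrow> (\<forall>j. (u1 j \<noteq> u2 j) = (u3 j \<noteq> u4 j))"

definition Tset :: "nat \<Rightarrow> nat \<Rightarrow> ((nat \<Rightarrow> bool) \<times> (nat \<Rightarrow> bool) \<times> (nat \<Rightarrow> bool) \<times> (nat \<Rightarrow> bool)) set" where
  "Tset n i = {(u1, u2, u3, u4). u1 \<in> layer n i \<and> u2 \<in> layer n i \<and> u3 \<in> layer n i \<and> u4 \<in> layer n i
                 \<and> sum4_zero u1 u2 u3 u4}"

definition Ncount :: "nat \<Rightarrow> nat \<Rightarrow> (nat \<Rightarrow> bool) set \<Rightarrow> nat" where
  "Ncount n i C = card {(u1, u2, u3, u4). u1 \<in> C \<inter> layer n i \<and> u2 \<in> C \<inter> layer n i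
        \<and> u3 \<in> C \<inter> layer n i \<and> u4 \<in> C \<inter> layer n i
        \<and> u1 \<noteq> u2 \<and> u1 \<noteq> u3 \<and> u1 \<noteq> u4 \<and> u2 \<noteq> u3 \<and> u2 \<noteq> u4 \<and> u3 \<noteq> u4
        \<and> sum4_zero u1 u2 u3 u4}"

text \<open>Filter: \<open>n \<rightarrow> \<infinity>\<close> along those n for which all the given reals times n are integers.\<close>
definition int_seq :: "real set \<Rightarrow> nat filter" where
  "int_seq S = inf sequentially (principal {n. \<forall>a\<in>S. a * real n \<in> \<int>})"

definition psi4 :: "real \<Rightarrow> real" where
  "psi4 \<gamma> = Lim (int_seq {\<gamma>})
     (\<lambda>n. log 2 (real (card (Tset n (nat \<lfloor>\<gamma> * real n\<rfloor>)))) / real n - 2 * h \<gamma>)"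

definition mats :: "nat \<Rightarrow> nat \<Rightarrow> (nat \<Rightarrow> nat \<Rightarrow> bool) set" where
  "mats m n = {M. \<forall>r c. (r \<ge> m \<or> c \<ge> n) \<longrightarrow> \<not> M r c}"

text \<open>Kernel \<open>{x : M x = 0}\<close> over GF(2).\<close>
definition kernel :: "nat \<Rightarrow> nat \<Rightarrow> (nat \<Rightarrow> nat \<Rightarrow> bool) \<Rightarrow> (nat \<Rightarrow> bool) set" where
  "kernel m n M = {x \<in> vecs n. \<forall>r<m. even (card {j. j < n \<and> M r j \<and> x j})}"

definition EN :: "nat \<Rightarrow> nat \<Rightarrow> nat \<Rightarrow> real" where
  "EN m n i = (\<Sum>M\<in>mats m n. real (Ncount n i (kernel m n M))) / real (card (mats m n))"

definition VarN :: "nat \<Rightarrow> nat \<Rightarrow> nat \<Rightarrow> real" where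
  "VarN m n i = (\<Sum>M\<in>mats m n. (real (Ncount n i (kernel m n M)) - EN m n i)\<^sup>2) / real (card (mats m n))"

end

theory Submission
  imports Defs "HOL-Real_Asymp.Real_Asymp"
begin

(*
  A quadruple of distinct nonzero vectors with zero sum has only the trivial linear relations, so
  it lies in the kernel of a random \<lambda>n \<times> n matrix with probability 8^(-\<lambda>n); hence
  E N_i = D_i 8^(-\<lambda>n), where D_i, the number of such quadruples in the layer L_i, equals the
  number of all zero-sum quadruples in L_i up to a polynomial factor.  Concatenation makes the logarithm of that number superadditive, so by
  Fekete's lemma it grows like n (\<psi>(4,\<gamma>) + 2h(\<gamma>)).

  A pair of quadruples lies in the kernel with probability (z/2^8)^(\<lambda>n), z the number of
  relations among its eight vectors.  z is at most twice the number w of subsums of the second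
  quadruple lying in the span of the first, and if w > 2^(3-e) the second quadruple is determined
  by the first up to e free vectors of the layer (a subgroup of index < 2^(e+1) of the 16 subsets
  has a complement generated by e singletons).  Summing, the excess of E N_i^2 over (E N_i)^2 is
  dominated by D_i |L_i|^2 32^(-\<lambda>n), which is 2^(-(\<psi>(4,\<gamma>) - \<lambda>) n) times (E N_i)^2.
*)

section \<open>Characters of \<open>GF(2)^n\<close>\<close>

type_synonym bvec = "nat \<Rightarrow> bool"

definition gf2_add :: "bvec \<Rightarrow> bvec \<Rightarrow> bvec" where
  "gf2_add x y = (\<lambda>j. x j \<noteq> y j)"

definition gf2_dot :: "nat \<Rightarrow> bvec \<Rightarrow> bvec \<Rightarrow> bool" where
  "gf2_dot n y x \<longleftrightarrow> odd (card {j. j < n \<and> y j \<and> x j})"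

definition gf2_sum :: "('a \<Rightarrow> bvec) \<Rightarrow> 'a set \<Rightarrow> bvec" where
  "gf2_sum v A = (\<lambda>j. odd (card {a\<in>A. v a j}))"

definition gf2_char :: "nat \<Rightarrow> bvec \<Rightarrow> bvec \<Rightarrow> real" where
  "gf2_char n y x = (if gf2_dot n y x then -1 else 1)"

definition zero_subsums :: "nat \<Rightarrow> ('a \<Rightarrow> bvec) \<Rightarrow> 'a set \<Rightarrow> 'a set set" where
  "zero_subsums n v I = {A. A \<subseteq> I \<and> (\<forall>j<n. \<not> gf2_sum v A j)}"

lemma odd_card_sym_diff:
  assumes "finite P" "finite Q"
  shows "odd (card (sym_diff P Q)) \<longleftrightarrow> odd (card P) \<noteq> odd (card Q)"
proof -
  have "card (sym_diff P Q) = card (P - Q) + card (Q - P)"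
    by (rule card_Un_disjoint) (use assms in auto)
  moreover have "card P = card (P - Q) + card (P \<inter> Q)" "card Q = card (Q - P) + card (P \<inter> Q)"
    using assms card_Int_Diff[of P Q] card_Int_Diff[of Q P] by (simp_all add: Int_commute)
  ultimately show ?thesis by auto
qed

lemma gf2_dot_add: "gf2_dot n y (gf2_add x z) \<longleftrightarrow> gf2_dot n y x \<noteq> gf2_dot n y z"
proof -
  have "{j. j < n \<and> y j \<and> gf2_add x z j} = sym_diff {j. j < n \<and> y j \<and> x j} {j. j < n \<and> y j \<and> z j}"
    by (auto simp: gf2_add_def)
  then show ?thesis unfolding gf2_dot_def by (simp add: odd_card_sym_diff)
qed

lemma gf2_sum_sym_diff:
  assumes "finite A" "finite B"
  shows "gf2_sum v (sym_diff A B) = gf2_add (gf2_sum v A) (gf2_sum v B)"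
proof
  fix j
  have "{a \<in> sym_diff A B. v a j} = sym_diff {a\<in>A. v a j} {a\<in>B. v a j}" by auto
  then show "gf2_sum v (sym_diff A B) j = gf2_add (gf2_sum v A) (gf2_sum v B) j"
    unfolding gf2_sum_def gf2_add_def using assms by (simp add: odd_card_sym_diff)
qed

lemma gf2_sum_empty [simp]: "gf2_sum v {} = (\<lambda>_. False)"
  by (simp add: gf2_sum_def)

lemma gf2_sum_singleton [simp]: "gf2_sum v {a} = v a"
proof
  fix j
  have "{b\<in>{a}. v b j} = (if v a j then {a} else {})" by auto
  then show "gf2_sum v {a} j = v a j" by (simp add: gf2_sum_def)
qed

lemma gf2_sum_insert:
  assumes "finite A" "a \<notin> A"
  shows "gf2_sum v (insert a A) = gf2_add (v a) (gf2_sum v A)"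
proof -
  have "insert a A = sym_diff {a} A" using assms by auto
  then show ?thesis using gf2_sum_sym_diff[of "{a}" A v] assms by simp
qed

lemma gf2_sum_cong: "(\<And>a. a \<in> A \<Longrightarrow> v a = w a) \<Longrightarrow> gf2_sum v A = gf2_sum w A"
  unfolding gf2_sum_def by (intro ext arg_cong[where f="\<lambda>S. odd (card S)"]) auto

lemma gf2_sum_reindex: "inj_on f A \<Longrightarrow> gf2_sum v (f ` A) = gf2_sum (v \<circ> f) A"
proof
  fix j assume inj: "inj_on f A"
  have "{b \<in> f ` A. v b j} = f ` {a \<in> A. v (f a) j}" by auto
  moreover have "card (f ` {a \<in> A. v (f a) j}) = card {a \<in> A. v (f a) j}"
    by (rule card_image) (rule inj_on_subset[OF inj], auto)
  ultimately show "gf2_sum v (f ` A) j = gf2_sum (v \<circ> f) A j" by (simp add: gf2_sum_def)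
qed

lemma gf2_sum_in_vecs: "(\<And>a. a \<in> A \<Longrightarrow> v a \<in> vecs n) \<Longrightarrow> gf2_sum v A \<in> vecs n"
  unfolding vecs_def gf2_sum_def by (smt (verit) Collect_empty_eq card.empty even_zero mem_Collect_eq)

lemma gf2_char_add: "gf2_char n y (gf2_add x z) = gf2_char n y x * gf2_char n y z"
  by (simp add: gf2_char_def gf2_dot_add)

lemma prod_gf2_char:
  "finite A \<Longrightarrow> (\<Prod>a\<in>A. gf2_char n y (v a)) = gf2_char n y (gf2_sum v A)"
proof (induction A rule: finite_induct)
  case empty then show ?case by (simp add: gf2_char_def gf2_dot_def)
next
  case (insert a A) then show ?case by (simp add: gf2_sum_insert gf2_char_add)
qed

lemma bij_betw_vecs_Pow: "bij_betw (\<lambda>x. {j. j < n \<and> x j}) (vecs n) (Pow {..<n})"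
  by (rule bij_betw_byWitness[where f' = "\<lambda>S j. j \<in> S"]) (auto simp: vecs_def fun_eq_iff, meson not_le)

lemma finite_vecs [simp]: "finite (vecs n)"
  using bij_betw_finite[OF bij_betw_vecs_Pow] by simp

lemma card_vecs: "card (vecs n) = 2 ^ n"
  using bij_betw_same_card[OF bij_betw_vecs_Pow] by (simp add: card_Pow)

lemma vecs_eqI: "x \<in> vecs n \<Longrightarrow> y \<in> vecs n \<Longrightarrow> (\<And>j. j < n \<Longrightarrow> x j = y j) \<Longrightarrow> x = y"
  by (simp add: vecs_def fun_eq_iff) (metis not_le)

text \<open>Orthogonality of characters: flipping a coordinate where \<open>x\<close> is nonzero changes the sign.\<close>
lemma sum_gf2_char:
  "(\<Sum>y\<in>vecs n. gf2_char n y x) = (if \<forall>j<n. \<not> x j then 2 ^ n else 0)"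
proof (cases "\<forall>j<n. \<not> x j")
  case True
  have "{j. j < n \<and> y j \<and> x j} = {}" for y
    using True by auto
  then have "gf2_char n y x = 1" for y
    unfolding gf2_char_def gf2_dot_def by (simp only: card.empty) simp
  then show ?thesis using True by (simp add: card_vecs)
next
  case False
  then obtain j where j: "j < n" "x j" by auto
  define f where "f y = y(j := \<not> y j)" for y :: bvec
  have bij: "bij_betw f (vecs n) (vecs n)"
    by (rule bij_betw_byWitness[where f'=f]) (use j in \<open>auto simp: f_def vecs_def split: if_splits\<close>)
  have neg: "gf2_char n (f y) x = - gf2_char n y x" for y
  proof -
    have "{i. i < n \<and> f y i \<and> x i} = sym_diff {i. i < n \<and> y i \<and> x i} {j}"
      using j by (auto simp: f_def)
    then show ?thesis unfolding gf2_char_def gf2_dot_def by (simp add: odd_card_sym_diff)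
  qed
  have "(\<Sum>y\<in>vecs n. gf2_char n y x) = (\<Sum>y\<in>vecs n. gf2_char n (f y) x)"
    using sum.reindex_bij_betw[OF bij, of "\<lambda>y. gf2_char n y x"] by simp
  also have "\<dots> = - (\<Sum>y\<in>vecs n. gf2_char n y x)" by (simp add: neg sum_negf)
  finally show ?thesis using False by simp
qed

lemma card_orthogonal:
  assumes fin: "finite I"
  shows "real (card {y \<in> vecs n. \<forall>a\<in>I. \<not> gf2_dot n y (v a)}) * 2 ^ card I
         = 2 ^ n * real (card (zero_subsums n v I))"
proof -
  have ind: "of_bool (\<forall>a\<in>I. \<not> gf2_dot n y (v a)) = (\<Prod>a\<in>I. (gf2_char n y (v a) + 1) / 2)" for y
  proof (cases "\<forall>a\<in>I. \<not> gf2_dot n y (v a)")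
    case True
    then show ?thesis by (simp add: gf2_char_def)
  next
    case False
    then obtain a where "a \<in> I" "gf2_dot n y (v a)" by auto
    then show ?thesis using fin False by (simp add: gf2_char_def)
  qed
  have "real (card {y \<in> vecs n. \<forall>a\<in>I. \<not> gf2_dot n y (v a)})
        = (\<Sum>y\<in>vecs n. of_bool (\<forall>a\<in>I. \<not> gf2_dot n y (v a)))"
    by (simp add: of_bool_def sum.If_cases Int_def)
  also have "\<dots> = (\<Sum>y\<in>vecs n. \<Prod>a\<in>I. (gf2_char n y (v a) + 1)) / 2 ^ card I"
    by (simp add: ind prod_dividef sum_divide_distrib)
  also have "\<dots> = (\<Sum>X\<in>Pow I. \<Sum>y\<in>vecs n. gf2_char n y (gf2_sum v X)) / 2 ^ card I"
    by (simp add: prod_add[OF fin] prod_gf2_char finite_subset[OF _ fin] sum.swap[of _ "vecs n"])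
  also have "\<dots> = 2 ^ n * real (card (zero_subsums n v I)) / 2 ^ card I"
    by (simp add: sum_gf2_char sum.If_cases fin zero_subsums_def Int_def)
  finally show ?thesis by simp
qed

section \<open>Uniformly random matrices\<close>

lemma mats_Suc: "mats (Suc m) n = (\<lambda>(M, y). M(m := y)) ` (mats m n \<times> vecs n)"
proof
  show "mats (Suc m) n \<subseteq> (\<lambda>(M, y). M(m := y)) ` (mats m n \<times> vecs n)"
  proof
    fix M assume M: "M \<in> mats (Suc m) n"
    have "(M(m := (\<lambda>_. False)), M m) \<in> mats m n \<times> vecs n"
      using M by (auto simp: mats_def vecs_def)
    then show "M \<in> (\<lambda>(M, y). M(m := y)) ` (mats m n \<times> vecs n)"
      by (rule rev_image_eqI) simp
  qed
qed (auto simp: mats_def vecs_def split: if_splits)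

lemma inj_on_mats_Suc: "inj_on (\<lambda>(M, y). M(m := y)) (mats m n \<times> vecs n)"
proof (rule inj_onI, clarify)
  fix M y M' y' assume "M \<in> mats m n" "M' \<in> mats m n" and eq: "M(m := y) = M'(m := y')"
  then have "M m = M' m" by (auto simp: mats_def fun_eq_iff)
  then show "M = M' \<and> y = y'" using eq by (metis fun_upd_same fun_upd_triv fun_upd_upd)
qed

lemma mats_0: "mats 0 n = {\<lambda>_ _. False}"
  by (auto simp: mats_def)

lemma finite_mats [simp]: "finite (mats m n)"
  by (induction m) (simp_all add: mats_0 mats_Suc)

text \<open>The rows of a uniformly random matrix are independent uniform vectors.\<close>
lemma sum_mats_prod_rows:
  fixes g :: "bvec \<Rightarrow> real"
  shows "(\<Sum>M\<in>mats m n. \<Prod>r<m. g (M r)) = (\<Sum>y\<in>vecs n. g y) ^ m"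
proof (induction m)
  case 0
  then show ?case by (simp add: mats_0)
next
  case (Suc m)
  have "(\<Sum>M\<in>mats (Suc m) n. \<Prod>r<Suc m. g (M r))
     = (\<Sum>(M, y)\<in>mats m n \<times> vecs n. \<Prod>r<Suc m. g ((M(m := y)) r))"
    unfolding mats_Suc by (subst sum.reindex[OF inj_on_mats_Suc]) (simp add: case_prod_beta)
  also have "\<dots> = (\<Sum>(M, y)\<in>mats m n \<times> vecs n. (\<Prod>r<m. g (M r)) * g y)"
    by (intro sum.cong refl) (auto intro!: prod.cong)
  also have "\<dots> = (\<Sum>M\<in>mats m n. \<Prod>r<m. g (M r)) * (\<Sum>y\<in>vecs n. g y)"
    by (simp add: sum_product sum.cartesian_product)
  finally show ?case using Suc by simp
qed

lemma card_mats: "real (card (mats m n)) = 2 ^ (n * m)"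
  using sum_mats_prod_rows[where g="\<lambda>_. 1" and m=m and n=n] by (simp add: card_vecs power_mult)

lemma kernel_iff: "x \<in> kernel m n M \<longleftrightarrow> x \<in> vecs n \<and> (\<forall>r<m. \<not> gf2_dot n (M r) x)"
  by (simp add: kernel_def gf2_dot_def)

lemma sum_mats_kernel_indicator:
  assumes fin: "finite I" and V: "\<And>a. a \<in> I \<Longrightarrow> v a \<in> vecs n"
  shows "(\<Sum>M\<in>mats m n. of_bool (\<forall>a\<in>I. v a \<in> kernel m n M))
         = real (card (mats m n)) * (real (card (zero_subsums n v I)) / 2 ^ card I) ^ m"
proof -
  define g :: "bvec \<Rightarrow> real" where "g y = of_bool (\<forall>a\<in>I. \<not> gf2_dot n y (v a))" for y
  have "of_bool (\<forall>a\<in>I. v a \<in> kernel m n M) = (\<Prod>r<m. g (M r))" for M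
    using V by (auto simp: g_def kernel_iff prod_zero_iff)
  then have "(\<Sum>M\<in>mats m n. of_bool (\<forall>a\<in>I. v a \<in> kernel m n M)) = (\<Sum>y\<in>vecs n. g y) ^ m"
    by (simp add: sum_mats_prod_rows)
  also have "(\<Sum>y\<in>vecs n. g y) = real (card {y \<in> vecs n. \<forall>a\<in>I. \<not> gf2_dot n y (v a)})"
    by (simp add: g_def Int_def flip: of_bool_def)
  also have "\<dots> = 2 ^ n * (real (card (zero_subsums n v I)) / 2 ^ card I)"
    using card_orthogonal[OF fin, of n v] by (simp add: field_simps)
  finally show ?thesis
    unfolding card_mats by (simp add: power_mult power_mult_distrib del: times_divide_eq_right)
qed

section \<open>Zero-sum quadruples: first and second moment\<close>

type_synonym quad = "bvec \<times> bvec \<times> bvec \<times> bvec"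

definition quad_nth :: "quad \<Rightarrow> nat \<Rightarrow> bvec" where
  "quad_nth t k = (case t of (a, b, c, d) \<Rightarrow> if k = 0 then a else if k = 1 then b else if k = 2 then c else d)"

definition Tset_distinct :: "nat \<Rightarrow> nat \<Rightarrow> quad set" where
  "Tset_distinct n i = {(u1, u2, u3, u4). u1 \<in> layer n i \<and> u2 \<in> layer n i \<and> u3 \<in> layer n i \<and> u4 \<in> layer n i
        \<and> u1 \<noteq> u2 \<and> u1 \<noteq> u3 \<and> u1 \<noteq> u4 \<and> u2 \<noteq> u3 \<and> u2 \<noteq> u4 \<and> u3 \<noteq> u4
        \<and> sum4_zero u1 u2 u3 u4}"

definition quad_in_kernel :: "nat \<Rightarrow> nat \<Rightarrow> (nat \<Rightarrow> bvec) \<Rightarrow> quad \<Rightarrow> bool" where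
  "quad_in_kernel m n M t \<longleftrightarrow> (\<forall>k\<in>{..<4}. quad_nth t k \<in> kernel m n M)"

lemma quad_nth_simps [simp]:
  "quad_nth (a,b,c,d) 0 = a" "quad_nth (a,b,c,d) 1 = b" "quad_nth (a,b,c,d) (Suc 0) = b"
  "quad_nth (a,b,c,d) 2 = c" "quad_nth (a,b,c,d) 3 = d"
  by (simp_all add: quad_nth_def)

lemma quad_eq_nth: "t = (quad_nth t 0, quad_nth t 1, quad_nth t 2, quad_nth t 3)"
  by (cases t) simp

lemma finite_layer [simp]: "finite (layer n i)"
  by (rule finite_subset[of _ "vecs n"]) (auto simp: layer_def)

lemma finite_Tset [simp]: "finite (Tset n i)"
  by (rule finite_subset[of _ "layer n i \<times> layer n i \<times> layer n i \<times> layer n i"]) (auto simp: Tset_def)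

lemma Tset_distinct_subset: "Tset_distinct n i \<subseteq> Tset n i"
  by (auto simp: Tset_distinct_def Tset_def)

lemma finite_Tset_distinct [simp]: "finite (Tset_distinct n i)"
  using finite_subset[OF Tset_distinct_subset] by simp

lemma quad_nth_layer: "t \<in> Tset_distinct n i \<Longrightarrow> k < 4 \<Longrightarrow> quad_nth t k \<in> layer n i"
  by (auto simp: Tset_distinct_def quad_nth_def)

lemma quad_nth_vecs: "t \<in> Tset_distinct n i \<Longrightarrow> k < 4 \<Longrightarrow> quad_nth t k \<in> vecs n"
  using quad_nth_layer by (simp add: layer_def)

lemma sum4_zero_last: "sum4_zero u1 u2 u3 u4 \<Longrightarrow> u4 j = (u1 j \<noteq> (u2 j \<noteq> u3 j))"
  unfolding sum4_zero_def by blast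

lemma quad_in_kernel_tuple:
  "quad_in_kernel m n M (a, b, c, d) \<longleftrightarrow> a \<in> kernel m n M \<and> b \<in> kernel m n M \<and> c \<in> kernel m n M \<and> d \<in> kernel m n M"
  by (auto simp: quad_in_kernel_def lessThan_nat_numeral)

lemma Ncount_kernel_eq_sum:
  "real (Ncount n i (kernel m n M)) = (\<Sum>t\<in>Tset_distinct n i. of_bool (quad_in_kernel m n M t))"
proof -
  have "{(u1, u2, u3, u4). u1 \<in> kernel m n M \<inter> layer n i \<and> u2 \<in> kernel m n M \<inter> layer n i
        \<and> u3 \<in> kernel m n M \<inter> layer n i \<and> u4 \<in> kernel m n M \<inter> layer n i
        \<and> u1 \<noteq> u2 \<and> u1 \<noteq> u3 \<and> u1 \<noteq> u4 \<and> u2 \<noteq> u3 \<and> u2 \<noteq> u4 \<and> u3 \<noteq> u4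
        \<and> sum4_zero u1 u2 u3 u4} = {t \<in> Tset_distinct n i. quad_in_kernel m n M t}"
    by (simp add: set_eq_iff Tset_distinct_def quad_in_kernel_tuple) blast
  then show ?thesis
    by (simp add: Ncount_def of_bool_def sum.If_cases Int_def)
qed

lemma gf2_sum_subset4:
  fixes v :: "nat \<Rightarrow> bvec"
  assumes "A \<subseteq> {..<4}"
  shows "gf2_sum v A j = ((0 \<in> A \<and> v 0 j) \<noteq> ((1 \<in> A \<and> v 1 j) \<noteq> ((2 \<in> A \<and> v 2 j) \<noteq> (3 \<in> A \<and> v 3 j))))"
proof -
  define B where "B k = (if k \<in> A \<and> v k j then {k} else {})" for k :: nat
  have "{a \<in> A. v a j} = sym_diff (B 0) (sym_diff (B 1) (sym_diff (B 2) (B 3)))"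
    using assms by (auto simp: B_def lessThan_nat_numeral)
  moreover have "finite (B k)" "odd (card (B k)) \<longleftrightarrow> k \<in> A \<and> v k j" for k
    by (simp_all add: B_def)
  ultimately show ?thesis
    unfolding gf2_sum_def by (simp add: odd_card_sym_diff del: One_nat_def)
qed

text \<open>The only linear relations among four distinct nonzero vectors summing to zero are the
  trivial ones: a relation of size one, two or three would force a vector to vanish, two of
  them to coincide, or (by complementation) again a vector to vanish.\<close>
lemma zero_subsums_distinct_quad:
  assumes t: "t \<in> Tset_distinct n i" and i: "0 < i"
  shows "zero_subsums n (quad_nth t) {..<4} = {{}, {..<4}}"
proof -
  obtain u1 u2 u3 u4 where tt: "t = (u1, u2, u3, u4)" by (cases t)
  have L: "u1 \<in> layer n i" "u2 \<in> layer n i" "u3 \<in> layer n i" "u4 \<in> layer n i"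
    and d: "u1 \<noteq> u2" "u1 \<noteq> u3" "u1 \<noteq> u4" "u2 \<noteq> u3" "u2 \<noteq> u4" "u3 \<noteq> u4"
    and s: "sum4_zero u1 u2 u3 u4" using t tt by (auto simp: Tset_distinct_def)
  have s4: "\<And>j. u4 j = (u1 j \<noteq> (u2 j \<noteq> u3 j))" using sum4_zero_last[OF s] .
  have nz: "\<exists>j<n. u j" if "u \<in> layer n i" for u
  proof (rule ccontr)
    assume "\<not> (\<exists>j<n. u j)"
    then have "{j. j < n \<and> u j} = {}" by auto
    then show False using that i unfolding layer_def by (metis (mono_tags) card.empty less_irrefl mem_Collect_eq)
  qed
  have neq: "\<exists>j<n. u j \<noteq> w j" if "u \<in> layer n i" "w \<in> layer n i" "u \<noteq> w" for u w
    using that vecs_eqI[of u n w] by (auto simp: layer_def)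
  have nz1: "\<exists>j<n. u1 j" and nz2: "\<exists>j<n. u2 j" and nz3: "\<exists>j<n. u3 j" and nz4: "\<exists>j<n. u4 j"
    using nz L by auto
  have n12: "\<exists>j<n. u1 j \<noteq> u2 j" and n13: "\<exists>j<n. u1 j \<noteq> u3 j" and n14: "\<exists>j<n. u1 j \<noteq> u4 j"
    and n23: "\<exists>j<n. u2 j \<noteq> u3 j" and n24: "\<exists>j<n. u2 j \<noteq> u4 j" and n34: "\<exists>j<n. u3 j \<noteq> u4 j"
    using neq L d by auto
  show ?thesis
  proof (rule set_eqI, rule iffI)
    fix A assume "A \<in> zero_subsums n (quad_nth t) {..<4}"
    then have A: "A \<subseteq> {..<4}" and z: "\<forall>j<n. \<not> gf2_sum (quad_nth t) A j"
      by (auto simp: zero_subsums_def)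
    have z': "\<forall>j<n. \<not> ((0 \<in> A \<and> u1 j) \<noteq> ((1 \<in> A \<and> u2 j) \<noteq> ((2 \<in> A \<and> u3 j) \<noteq> (3 \<in> A \<and> u4 j))))"
      using z gf2_sum_subset4[OF A, of "quad_nth t"] by (simp add: tt)
    have "(0 \<in> A \<longleftrightarrow> 1 \<in> A) \<and> (0 \<in> A \<longleftrightarrow> 2 \<in> A) \<and> (0 \<in> A \<longleftrightarrow> 3 \<in> A)"
      using z' nz1 nz2 nz3 nz4 n12 n13 n14 n23 n24 n34 s4
      by (cases "0 \<in> A"; cases "1 \<in> A"; cases "2 \<in> A"; cases "3 \<in> A"; metis)
    then have "A = {} \<or> A = {..<4}"
      using A by (cases "0 \<in> A") (auto simp: less_Suc_eq numeral_eq_Suc; blast?)+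
    then show "A \<in> {{}, {..<4}}" by auto
  next
    have "gf2_sum (quad_nth t) {..<4} j = (u1 j \<noteq> (u2 j \<noteq> (u3 j \<noteq> u4 j)))" for j
      using gf2_sum_subset4[of "{..<4}" "quad_nth t" j] by (simp add: tt)
    then have "\<forall>j<n. \<not> gf2_sum (quad_nth t) {..<4} j"
      using s4 by auto
    then show "A \<in> zero_subsums n (quad_nth t) {..<4}" if "A \<in> {{}, {..<4}}" for A
      using that by (auto simp: zero_subsums_def)
  qed
qed

lemma sum_mats_quad_in_kernel:
  assumes t: "t \<in> Tset_distinct n i" and i: "0 < i"
  shows "(\<Sum>M\<in>mats m n. of_bool (quad_in_kernel m n M t)) = real (card (mats m n)) * (1/8) ^ m"
proof -
  have "(\<Sum>M\<in>mats m n. of_bool (quad_in_kernel m n M t))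
      = real (card (mats m n)) * (real (card (zero_subsums n (quad_nth t) {..<4})) / 2 ^ 4) ^ m"
    unfolding quad_in_kernel_def
    by (subst sum_mats_kernel_indicator) (auto intro: quad_nth_vecs[OF t])
  moreover have "card {{}, {..<4::nat}} = 2"
    by (simp add: lessThan_nat_numeral)
  ultimately show ?thesis
    by (simp add: zero_subsums_distinct_quad[OF t i])
qed

lemma EN_eq:
  assumes "0 < i"
  shows "EN m n i = real (card (Tset_distinct n i)) * (1/8) ^ m"
proof -
  have "(\<Sum>M\<in>mats m n. real (Ncount n i (kernel m n M)))
      = (\<Sum>t\<in>Tset_distinct n i. \<Sum>M\<in>mats m n. of_bool (quad_in_kernel m n M t))"
    by (simp add: Ncount_kernel_eq_sum sum.swap[of _ "mats m n"] del: sum_of_bool_eq)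
  also have "\<dots> = real (card (Tset_distinct n i)) * real (card (mats m n)) * (1/8) ^ m"
    by (simp add: sum_mats_quad_in_kernel assms del: sum_of_bool_eq)
  finally show ?thesis
    using card_mats[of m n] by (simp add: EN_def)
qed

definition octet :: "quad \<Rightarrow> quad \<Rightarrow> nat \<Rightarrow> bvec" where
  "octet t t' a = (if a < 4 then quad_nth t a else quad_nth t' (a - 4))"

lemma quad_in_kernel_pair:
  "quad_in_kernel m n M t \<and> quad_in_kernel m n M t' \<longleftrightarrow> (\<forall>a\<in>{..<8}. octet t t' a \<in> kernel m n M)"
proof -
  have "(\<forall>a\<in>{..<8}. P a) \<longleftrightarrow> (\<forall>k\<in>{..<4}. P k) \<and> (\<forall>k\<in>{..<4}. P (k + 4))" for P :: "nat \<Rightarrow> bool"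
  proof (intro iffI ballI)
    fix a :: nat assume h: "(\<forall>k\<in>{..<4}. P k) \<and> (\<forall>k\<in>{..<4}. P (k + 4))" and "a \<in> {..<8}"
    then show "P a"
      using h[THEN conjunct2, rule_format, of "a - 4"] h by (cases "a < 4") auto
  qed auto
  then show ?thesis
    by (simp add: quad_in_kernel_def octet_def)
qed

lemma VarN_eq:
  assumes i: "0 < i"
  shows "VarN m n i = (\<Sum>t\<in>Tset_distinct n i. \<Sum>t'\<in>Tset_distinct n i.
           (real (card (zero_subsums n (octet t t') {..<8})) / 256) ^ m - (1/64) ^ m)"
proof -
  define D where "D = Tset_distinct n i"
  define c where "c = real (card (mats m n))"
  define E where "E = EN m n i"
  define N where "N M = (\<Sum>t\<in>D. of_bool (quad_in_kernel m n M t) :: real)" for M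
  define Z where "Z t t' = real (card (zero_subsums n (octet t t') {..<8}))" for t t'
  have pos: "c > 0" using card_mats[of m n] by (simp add: c_def)
  have E: "E = real (card D) * (1/8) ^ m" using EN_eq[OF i] by (simp add: E_def D_def)
  have sN: "(\<Sum>M\<in>mats m n. N M) = c * E"
    unfolding N_def
    by (subst sum.swap) (simp add: sum_mats_quad_in_kernel i D_def c_def E del: sum_of_bool_eq)
  have pair: "(\<Sum>M\<in>mats m n. of_bool (quad_in_kernel m n M t) * of_bool (quad_in_kernel m n M t'))
      = c * (Z t t' / 256) ^ m" if "t \<in> D" "t' \<in> D" for t t'
    unfolding of_bool_conj[symmetric] quad_in_kernel_pair c_def Z_def
    by (subst sum_mats_kernel_indicator) (use that in \<open>auto simp: D_def octet_def quad_nth_vecs\<close>)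
  have "(\<Sum>M\<in>mats m n. N M ^ 2)
      = (\<Sum>t\<in>D. \<Sum>t'\<in>D. \<Sum>M\<in>mats m n. of_bool (quad_in_kernel m n M t) * of_bool (quad_in_kernel m n M t'))"
    unfolding N_def power2_eq_square sum_product
    by (subst sum.swap) (rule sum.cong[OF refl], rule sum.swap)
  also have "\<dots> = (\<Sum>t\<in>D. \<Sum>t'\<in>D. c * (Z t t' / 256) ^ m)"
    by (intro sum.cong refl pair)
  finally have sN2: "(\<Sum>M\<in>mats m n. N M ^ 2) = c * (\<Sum>t\<in>D. \<Sum>t'\<in>D. (Z t t' / 256) ^ m)"
    by (simp add: sum_distrib_left)
  have "(\<Sum>M\<in>mats m n. (real (Ncount n i (kernel m n M)) - E)\<^sup>2)
      = (\<Sum>M\<in>mats m n. N M ^ 2) - 2 * E * (\<Sum>M\<in>mats m n. N M) + c * E ^ 2"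
    by (simp add: Ncount_kernel_eq_sum N_def D_def power2_diff sum.distrib sum_subtractf
        sum_distrib_left c_def algebra_simps)
  also have "\<dots> = c * ((\<Sum>t\<in>D. \<Sum>t'\<in>D. (Z t t' / 256) ^ m) - E ^ 2)"
    unfolding sN sN2 by (simp add: algebra_simps power2_eq_square)
  also have "E ^ 2 = (\<Sum>t\<in>D. \<Sum>t'\<in>D. (1/64 :: real) ^ m)"
    by (simp add: E power2_eq_square power_mult_distrib[symmetric])
  finally show ?thesis
    using pos unfolding VarN_def E_def[symmetric] c_def[symmetric]
    by (simp add: sum_subtractf D_def Z_def)
qed

section \<open>Subgroups of \<open>(Pow X, \<triangle>)\<close>\<close>

definition symdiff_group :: "'a set set \<Rightarrow> bool" where
  "symdiff_group G \<longleftrightarrow> {} \<in> G \<and> (\<forall>B\<in>G. \<forall>C\<in>G. sym_diff B C \<in> G)"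

lemma symdiff_group_Pow_subset:
  assumes "finite X" "symdiff_group G" "\<And>x. x \<in> X \<Longrightarrow> {x} \<in> G"
  shows "Pow X \<subseteq> G"
proof
  fix S assume "S \<in> Pow X"
  then have "finite S" "S \<subseteq> X" using assms(1) finite_subset by auto
  then show "S \<in> G"
  proof (induction S rule: finite_induct)
    case empty then show ?case using assms(2) by (simp add: symdiff_group_def)
  next
    case (insert x F)
    then have "F \<in> G" "{x} \<in> G" using assms(3) by auto
    then have "sym_diff F {x} \<in> G" using assms(2) unfolding symdiff_group_def by blast
    moreover have "sym_diff F {x} = insert x F" using insert.hyps(2) by auto
    ultimately show ?case by simp
  qed
qed

lemma symdiff_group_extend:
  assumes G: "finite X" "G \<subseteq> Pow X" "symdiff_group G" and j: "j \<in> X" "{j} \<notin> G"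
  defines "H \<equiv> G \<union> (\<lambda>B. sym_diff B {j}) ` G"
  shows "H \<subseteq> Pow X" "symdiff_group H" "card H = 2 * card G"
proof -
  have clG: "sym_diff B C \<in> G" if "B \<in> G" "C \<in> G" for B C
    using G(3) that by (simp add: symdiff_group_def)
  show "H \<subseteq> Pow X" using G(2) j(1) by (auto simp: H_def)
  have inv: "sym_diff (sym_diff A {j}) {j} = A" for A by auto
  have memH: "A \<in> H \<longleftrightarrow> A \<in> G \<or> sym_diff A {j} \<in> G" for A
    unfolding H_def Un_iff image_iff by (metis inv)
  have shift: "sym_diff (sym_diff B C) {j} = sym_diff (sym_diff B {j}) C"
    "sym_diff (sym_diff B C) {j} = sym_diff B (sym_diff C {j})"
    "sym_diff B C = sym_diff (sym_diff B {j}) (sym_diff C {j})" for B C :: "'a set"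
    by auto
  have "sym_diff B C \<in> H" if "B \<in> H" "C \<in> H" for B C
    using that clG shift unfolding memH by metis
  then show "symdiff_group H"
    using G(3) unfolding symdiff_group_def H_def by blast
  have disj: "G \<inter> (\<lambda>B. sym_diff B {j}) ` G = {}"
  proof (rule ccontr)
    assume "G \<inter> (\<lambda>B. sym_diff B {j}) ` G \<noteq> {}"
    then obtain B where "B \<in> G" "sym_diff B {j} \<in> G" by auto
    then have "sym_diff B (sym_diff B {j}) \<in> G" by (rule clG)
    moreover have "sym_diff B (sym_diff B {j}) = {j}" by auto
    ultimately show False using j(2) by simp
  qed
  have "inj_on (\<lambda>B. sym_diff B {j}) G" by (rule inj_onI) (auto simp: set_eq_iff)
  moreover have "finite G" using G(1,2) finite_subset by blast
  ultimately show "card H = 2 * card G"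
    unfolding H_def by (simp add: card_Un_disjoint disj card_image)
qed

lemma symdiff_cover_of_Pow_subset:
  assumes "Pow X \<subseteq> G"
  shows "\<exists>E\<subseteq>X. card E \<le> e \<and> (\<forall>S\<subseteq>X. \<exists>C\<in>G. \<exists>D\<subseteq>E. S = sym_diff C D)"
proof (intro exI[of _ "{}"] conjI allI impI)
  fix S assume "S \<subseteq> X"
  then have "S \<in> G" using assms by blast
  then show "\<exists>C\<in>G. \<exists>D\<subseteq>{}. S = sym_diff C D" by (intro bexI[of _ S]) auto
qed auto

lemma symdiff_cover_insert:
  assumes "\<forall>S\<subseteq>X. \<exists>C\<in>G \<union> (\<lambda>B. sym_diff B {j}) ` G. \<exists>D\<subseteq>E. S = sym_diff C D"
  shows "\<forall>S\<subseteq>X. \<exists>C\<in>G. \<exists>D\<subseteq>insert j E. S = sym_diff C D"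
proof (intro allI impI)
  fix S assume "S \<subseteq> X"
  then obtain C D where C: "C \<in> G \<union> (\<lambda>B. sym_diff B {j}) ` G" "D \<subseteq> E" "S = sym_diff C D"
    using assms by (elim allE impE bexE exE conjE)
  from C(1) consider "C \<in> G" | C0 where "C0 \<in> G" "C = sym_diff C0 {j}"
    by (elim UnE imageE)
  then show "\<exists>C\<in>G. \<exists>D\<subseteq>insert j E. S = sym_diff C D"
  proof cases
    case 1
    show ?thesis
      by (intro bexI[of _ C] exI[of _ D] conjI) (use 1 C(2,3) in auto)
  next
    case 2
    have "S = sym_diff C0 (sym_diff {j} D)" using C(3) 2(2) by auto
    then show ?thesis
      by (intro bexI[of _ C0] exI[of _ "sym_diff {j} D"] conjI) (use 2(1) C(2) in auto)
  qed
qed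

lemma symdiff_group_cover:
  assumes "finite X" "G \<subseteq> Pow X" "symdiff_group G" "2 ^ card X < 2 ^ Suc e * card G"
  shows "\<exists>E\<subseteq>X. card E \<le> e \<and> (\<forall>S\<subseteq>X. \<exists>C\<in>G. \<exists>D\<subseteq>E. S = sym_diff C D)"
  using assms(2-4)
proof (induction e arbitrary: G)
  case (0 G)
  show ?case
  proof (cases "\<forall>x\<in>X. {x} \<in> G")
    case True
    then show ?thesis
      using symdiff_group_Pow_subset[OF assms(1) "0.prems"(2)] by (intro symdiff_cover_of_Pow_subset) blast
  next
    case False
    then obtain j where j: "j \<in> X" "{j} \<notin> G" by auto
    define H where "H = G \<union> (\<lambda>B. sym_diff B {j}) ` G"
    note H = symdiff_group_extend[OF assms(1) "0.prems"(1,2) j, folded H_def]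
    have "card H \<le> 2 ^ card X"
      using card_mono[OF _ H(1)] assms(1) by (simp add: card_Pow)
    then show ?thesis using H(3) "0.prems"(3) by simp
  qed
next
  case (Suc e G)
  show ?case
  proof (cases "\<forall>x\<in>X. {x} \<in> G")
    case True
    then show ?thesis
      using symdiff_group_Pow_subset[OF assms(1) Suc.prems(2)] by (intro symdiff_cover_of_Pow_subset) blast
  next
    case False
    then obtain j where j: "j \<in> X" "{j} \<notin> G" by auto
    define H where "H = G \<union> (\<lambda>B. sym_diff B {j}) ` G"
    note H = symdiff_group_extend[OF assms(1) Suc.prems(1,2) j, folded H_def]
    have "2 ^ card X < 2 ^ Suc e * card H"
      using Suc.prems(3) unfolding H(3) by (simp add: algebra_simps)
    then obtain E where E: "E \<subseteq> X" "card E \<le> e"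
      and cover: "\<forall>S\<subseteq>X. \<exists>C\<in>H. \<exists>D\<subseteq>E. S = sym_diff C D"
      using Suc.IH[OF H(1,2)] by blast
    show ?thesis
    proof (intro exI[of _ "insert j E"] conjI)
      show "insert j E \<subseteq> X" using E(1) j(1) by blast
      show "card (insert j E) \<le> Suc e"
        using E(2) finite_subset[OF E(1) assms(1)] by (simp add: card_insert_if)
      show "\<forall>S\<subseteq>X. \<exists>C\<in>G. \<exists>D\<subseteq>insert j E. S = sym_diff C D"
        using cover unfolding H_def by (rule symdiff_cover_insert)
    qed
  qed
qed

section \<open>Overlapping pairs of quadruples\<close>

definition quad_span :: "quad \<Rightarrow> bvec set" where
  "quad_span t = gf2_sum (quad_nth t) ` Pow {..<4}"

definition shared_subsums :: "quad \<Rightarrow> quad \<Rightarrow> nat set set" where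
  "shared_subsums t t' = {B \<in> Pow {..<4}. gf2_sum (quad_nth t') B \<in> quad_span t}"

lemma gf2_sum_octet:
  assumes "S \<subseteq> {..<8}"
  shows "gf2_sum (octet t t') S
       = gf2_add (gf2_sum (quad_nth t) (S \<inter> {..<4})) (gf2_sum (quad_nth t') ((\<lambda>a. a - 4) ` (S - {..<4})))"
proof -
  have "finite S" using assms finite_subset by blast
  moreover have "S = sym_diff (S \<inter> {..<4}) (S - {..<4})" by auto
  ultimately have "gf2_sum (octet t t') S
      = gf2_add (gf2_sum (octet t t') (S \<inter> {..<4})) (gf2_sum (octet t t') (S - {..<4}))"
    by (metis finite_Diff finite_Int gf2_sum_sym_diff)
  moreover have "gf2_sum (octet t t') (S \<inter> {..<4}) = gf2_sum (quad_nth t) (S \<inter> {..<4})"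
    by (rule gf2_sum_cong) (simp add: octet_def)
  moreover have "gf2_sum (quad_nth t') ((\<lambda>a. a - 4) ` (S - {..<4})) = gf2_sum (octet t t') (S - {..<4})"
    by (subst gf2_sum_reindex) (auto intro!: inj_onI gf2_sum_cong simp: octet_def)
  ultimately show ?thesis by simp
qed

lemma card_subsums_eq_le_2:
  assumes t: "t \<in> Tset_distinct n i" and i: "0 < i"
  shows "card {A. A \<subseteq> {..<4} \<and> gf2_sum (quad_nth t) A = w} \<le> 2"
proof (cases "{A. A \<subseteq> {..<4} \<and> gf2_sum (quad_nth t) A = w} = {}")
  case False
  then obtain A0 where A0: "A0 \<subseteq> {..<4}" "gf2_sum (quad_nth t) A0 = w" by auto
  have "{A. A \<subseteq> {..<4} \<and> gf2_sum (quad_nth t) A = w} \<subseteq> {A0, {..<4} - A0}"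
  proof
    fix A assume "A \<in> {A. A \<subseteq> {..<4} \<and> gf2_sum (quad_nth t) A = w}"
    then have A: "A \<subseteq> {..<4}" "gf2_sum (quad_nth t) A = w" by auto
    have "finite A" "finite A0" using A(1) A0(1) finite_subset by auto
    then have "gf2_sum (quad_nth t) (sym_diff A A0) = (\<lambda>_. False)"
      using A A0 by (simp add: gf2_sum_sym_diff gf2_add_def)
    then have "sym_diff A A0 \<in> zero_subsums n (quad_nth t) {..<4}"
      using A(1) A0(1) by (auto simp: zero_subsums_def)
    then have "sym_diff A A0 = {} \<or> sym_diff A A0 = {..<4}"
      unfolding zero_subsums_distinct_quad[OF t i] by simp
    then show "A \<in> {A0, {..<4} - A0}"
      using A(1) A0(1) by (auto simp: set_eq_iff)
  qed
  then have "card {A. A \<subseteq> {..<4} \<and> gf2_sum (quad_nth t) A = w} \<le> card {A0, {..<4} - A0}"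
    by (rule card_mono[rotated]) simp
  also have "\<dots> \<le> 2" by (simp add: card_insert_if)
  finally show ?thesis .
next
  case True
  then show ?thesis by (simp only: card.empty)
qed

text \<open>Splitting a relation among the eight vectors into its \<open>t\<close>-part and \<open>t'\<close>-part: the
  \<open>t'\<close>-part ranges over \<open>shared_subsums t t'\<close>, and each determines its \<open>t\<close>-part up to
  the two choices of \<open>card_subsums_eq_le_2\<close>.\<close>
lemma card_zero_subsums_octet:
  assumes t: "t \<in> Tset_distinct n i" and t': "t' \<in> Tset_distinct n i" and i: "0 < i"
  shows "card (zero_subsums n (octet t t') {..<8}) \<le> 2 * card (shared_subsums t t')"
proof -
  define fib where "fib B = {A. A \<subseteq> {..<4} \<and> gf2_sum (quad_nth t) A = gf2_sum (quad_nth t') B}" for B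
  define split where "split S = ((\<lambda>a. a - 4) ` (S - {..<4}), S \<inter> {..<4})" for S :: "nat set"
  have "S = snd (split S) \<union> (\<lambda>b. b + 4) ` fst (split S)" for S
    by (auto simp: split_def image_image image_iff)
  then have inj: "inj_on split (zero_subsums n (octet t t') {..<8})"
    by (metis inj_onI)
  have img: "split ` zero_subsums n (octet t t') {..<8} \<subseteq> (SIGMA B:shared_subsums t t'. fib B)"
  proof (rule image_subsetI)
    fix S assume "S \<in> zero_subsums n (octet t t') {..<8}"
    then have S: "S \<subseteq> {..<8}" "\<forall>j<n. \<not> gf2_sum (octet t t') S j"
      by (auto simp: zero_subsums_def)
    define A where "A = S \<inter> {..<4}"
    define B where "B = (\<lambda>a. a - 4) ` (S - {..<4})"
    have AB: "A \<subseteq> {..<4}" "B \<subseteq> {..<4}" using S(1) by (auto simp: A_def B_def)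
    have "gf2_sum (quad_nth t) A = gf2_sum (quad_nth t') B"
    proof (rule vecs_eqI[of _ n])
      show "gf2_sum (quad_nth t) A \<in> vecs n" "gf2_sum (quad_nth t') B \<in> vecs n"
        using AB by (auto intro!: gf2_sum_in_vecs quad_nth_vecs[OF t] quad_nth_vecs[OF t'])
      show "gf2_sum (quad_nth t) A j = gf2_sum (quad_nth t') B j" if "j < n" for j
        using S(2) that unfolding gf2_sum_octet[OF S(1)] A_def B_def by (auto simp: gf2_add_def)
    qed
    then show "split S \<in> (SIGMA B:shared_subsums t t'. fib B)"
      using AB by (auto simp: split_def A_def[symmetric] B_def[symmetric] shared_subsums_def
          quad_span_def fib_def intro!: rev_image_eqI[of A])
  qed
  have fin: "finite (shared_subsums t t')" "finite (fib B)" for B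
    by (auto intro: finite_subset[of _ "Pow {..<4}"] simp: shared_subsums_def fib_def)
  have "card (zero_subsums n (octet t t') {..<8}) \<le> card (SIGMA B:shared_subsums t t'. fib B)"
    using card_inj_on_le[OF inj img] fin by (simp add: finite_SigmaI)
  also have "\<dots> = (\<Sum>B\<in>shared_subsums t t'. card (fib B))"
    using fin by (simp add: card_SigmaI)
  also have "\<dots> \<le> (\<Sum>B\<in>shared_subsums t t'. 2)"
    unfolding fib_def by (intro sum_mono card_subsums_eq_le_2[OF t i])
  finally show ?thesis by simp
qed

lemma symdiff_group_shared_subsums: "symdiff_group (shared_subsums t t')"
  unfolding symdiff_group_def
proof (intro conjI ballI)
  show "{} \<in> shared_subsums t t'"
    unfolding shared_subsums_def quad_span_def by (auto intro: rev_image_eqI[of "{}"])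
  fix B C assume "B \<in> shared_subsums t t'" "C \<in> shared_subsums t t'"
  then obtain A1 A2 where A: "A1 \<subseteq> {..<4}" "A2 \<subseteq> {..<4}"
    "gf2_sum (quad_nth t') B = gf2_sum (quad_nth t) A1" "gf2_sum (quad_nth t') C = gf2_sum (quad_nth t) A2"
    and BC: "B \<subseteq> {..<4}" "C \<subseteq> {..<4}" unfolding shared_subsums_def quad_span_def by auto
  have "finite A1" "finite A2" "finite B" "finite C"
    using A BC by (auto intro: finite_subset[of _ "{..<4}"])
  then have "gf2_sum (quad_nth t') (sym_diff B C) = gf2_sum (quad_nth t) (sym_diff A1 A2)"
    using A by (simp add: gf2_sum_sym_diff)
  moreover have "sym_diff A1 A2 \<subseteq> {..<4}" "sym_diff B C \<subseteq> {..<4}" using A BC by auto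
  ultimately show "sym_diff B C \<in> shared_subsums t t'"
    unfolding shared_subsums_def quad_span_def by auto
qed

definition quads_spanned :: "nat \<Rightarrow> nat \<Rightarrow> quad \<Rightarrow> nat set \<Rightarrow> quad set" where
  "quads_spanned n i t E = {t' \<in> Tset_distinct n i.
     \<forall>p<4. \<exists>s\<in>quad_span t. \<exists>D\<subseteq>E. quad_nth t' p = gf2_add s (gf2_sum (quad_nth t') D)}"

lemma mem_quads_spanned:
  assumes t': "t' \<in> Tset_distinct n i" and e: "8 < 2 ^ e * card (shared_subsums t t')"
  shows "\<exists>E\<subseteq>{..<4}. card E \<le> e \<and> t' \<in> quads_spanned n i t E"
proof -
  have "shared_subsums t t' \<subseteq> Pow {..<4}"
    by (auto simp: shared_subsums_def)
  moreover have "2 ^ card {..<4::nat} < 2 ^ Suc e * card (shared_subsums t t')"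
    using e by (simp add: mult.commute)
  ultimately have "\<exists>E\<subseteq>{..<4}. card E \<le> e \<and>
      (\<forall>S\<subseteq>{..<4}. \<exists>C\<in>shared_subsums t t'. \<exists>D\<subseteq>E. S = sym_diff C D)"
    by (rule symdiff_group_cover[OF finite_lessThan _ symdiff_group_shared_subsums])
  then obtain E where E: "E \<subseteq> {..<4}" "card E \<le> e"
    and cover: "\<forall>S\<subseteq>{..<4}. \<exists>C\<in>shared_subsums t t'. \<exists>D\<subseteq>E. S = sym_diff C D"
    by (elim exE conjE)
  have spanned: "\<exists>s\<in>quad_span t. \<exists>D\<subseteq>E. quad_nth t' p = gf2_add s (gf2_sum (quad_nth t') D)"
    if p: "p < 4" for p
  proof -
    have "{p} \<subseteq> {..<4}" using p by simp
    then obtain C D where CD: "C \<in> shared_subsums t t'" "D \<subseteq> E" "{p} = sym_diff C D"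
      using cover by blast
    have "C \<subseteq> {..<4}" using CD(1) by (simp add: shared_subsums_def)
    then have fin: "finite C" "finite D"
      using CD(2) E(1) by (meson finite_lessThan finite_subset subset_trans)+
    have "quad_nth t' p = gf2_sum (quad_nth t') {p}" by simp
    also have "\<dots> = gf2_add (gf2_sum (quad_nth t') C) (gf2_sum (quad_nth t') D)"
      unfolding CD(3) using fin by (rule gf2_sum_sym_diff)
    finally show ?thesis
      using CD(1,2) unfolding shared_subsums_def by blast
  qed
  have "t' \<in> quads_spanned n i t E"
    using t' spanned by (simp add: quads_spanned_def)
  with E show ?thesis by blast
qed

text \<open>A quadruple in \<open>quads_spanned n i t E\<close> is determined by its entries indexed by \<open>E\<close>
  together with, for each of its four entries, an element of \<open>quad_span t\<close> and a subset of \<open>E\<close>.\<close>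
lemma card_quads_spanned:
  assumes E: "E \<subseteq> {..<4}"
  shows "card (quads_spanned n i t E) \<le> card (layer n i) ^ card E * 256 ^ 4"
proof -
  define Dom where "Dom = (\<Pi>\<^sub>E a\<in>E. layer n i) \<times> (\<Pi>\<^sub>E p\<in>{..<4::nat}. quad_span t \<times> Pow E)"
  define f where "f g c p = gf2_add (fst (c p)) (gf2_sum g (snd (c p)))"
    for g :: "nat \<Rightarrow> bvec" and c :: "nat \<Rightarrow> bvec \<times> nat set" and p
  define \<Phi> where "\<Phi> = (\<lambda>(g, c). (f g c 0, f g c 1, f g c 2, f g c 3))"
  have finE: "finite E" using E finite_subset by blast
  have card_span: "card (quad_span t) \<le> 16"
    unfolding quad_span_def using card_image_le[of "Pow {..<4::nat}" "gf2_sum (quad_nth t)"]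
    by (simp add: card_Pow)
  have finDom: "finite Dom"
    by (simp add: Dom_def finite_PiE finE quad_span_def)
  have "quads_spanned n i t E \<subseteq> \<Phi> ` Dom"
  proof
    fix t' assume t': "t' \<in> quads_spanned n i t E"
    have "\<forall>p\<in>{..<4}. \<exists>x. fst x \<in> quad_span t \<and> snd x \<subseteq> E
        \<and> quad_nth t' p = gf2_add (fst x) (gf2_sum (quad_nth t') (snd x))"
    proof
      fix p :: nat assume "p \<in> {..<4}"
      then obtain s D where "s \<in> quad_span t" "D \<subseteq> E" "quad_nth t' p = gf2_add s (gf2_sum (quad_nth t') D)"
        using t' unfolding quads_spanned_def by blast
      then show "\<exists>x. fst x \<in> quad_span t \<and> snd x \<subseteq> E
          \<and> quad_nth t' p = gf2_add (fst x) (gf2_sum (quad_nth t') (snd x))"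
        by (intro exI[of _ "(s, D)"]) simp
    qed
    then obtain c where c: "\<forall>p\<in>{..<4}. fst (c p) \<in> quad_span t \<and> snd (c p) \<subseteq> E
        \<and> quad_nth t' p = gf2_add (fst (c p)) (gf2_sum (quad_nth t') (snd (c p)))"
      by (elim bchoice[THEN exE])
    have fp: "f (restrict (quad_nth t') E) (restrict c {..<4}) p = quad_nth t' p" if "p < 4" for p
    proof -
      have "gf2_sum (restrict (quad_nth t') E) (snd (c p)) = gf2_sum (quad_nth t') (snd (c p))"
        using c that by (intro gf2_sum_cong) auto
      then show ?thesis using c that by (simp add: f_def)
    qed
    have "\<Phi> (restrict (quad_nth t') E, restrict c {..<4}) = t'"
      using fp[of 0] fp[of 1] fp[of 2] fp[of 3] quad_eq_nth[of t'] by (simp add: \<Phi>_def)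
    moreover have "restrict (quad_nth t') E \<in> (\<Pi>\<^sub>E a\<in>E. layer n i)"
      using E t' quad_nth_layer[of t' n i] by (auto simp: quads_spanned_def)
    moreover have "restrict c {..<4} \<in> (\<Pi>\<^sub>E p\<in>{..<4}. quad_span t \<times> Pow E)"
      using c by (auto simp: mem_Times_iff)
    ultimately show "t' \<in> \<Phi> ` Dom"
      unfolding Dom_def by (metis SigmaI image_eqI)
  qed
  then have "card (quads_spanned n i t E) \<le> card (\<Phi> ` Dom)"
    by (intro card_mono finite_imageI finDom)
  also have "\<dots> \<le> card Dom"
    by (rule card_image_le[OF finDom])
  also have "\<dots> = card (layer n i) ^ card E * (card (quad_span t) * 2 ^ card E) ^ 4"
    by (simp add: Dom_def card_cartesian_product card_PiE finE card_Pow)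
  also have "\<dots> \<le> card (layer n i) ^ card E * 256 ^ 4"
  proof -
    have "card E \<le> 4" using card_mono[OF _ E] by simp
    then have "card (quad_span t) * 2 ^ card E \<le> 16 * 2 ^ 4"
      using card_span by (intro mult_le_mono power_increasing) auto
    then show ?thesis by (intro mult_le_mono2 power_mono) auto
  qed
  finally show ?thesis .
qed

lemma card_pairs_shared_large:
  assumes l: "1 \<le> card (layer n i)"
  shows "card {p \<in> Tset_distinct n i \<times> Tset_distinct n i. 8 < 2 ^ e * card (shared_subsums (fst p) (snd p))}
         \<le> card (Tset_distinct n i) * (16 * 256 ^ 4 * card (layer n i) ^ e)"
proof -
  define \<E> where "\<E> = {E. E \<subseteq> {..<4::nat} \<and> card E \<le> e}"
  have finE: "finite \<E>" by (rule finite_subset[of _ "Pow {..<4}"]) (auto simp: \<E>_def)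
  have cE: "card \<E> \<le> 16" using card_mono[of "Pow {..<4::nat}" \<E>] by (auto simp: \<E>_def card_Pow)
  have finQ: "finite (quads_spanned n i t E)" for t E
    by (rule finite_subset[of _ "Tset_distinct n i"]) (auto simp: quads_spanned_def)
  have "{p \<in> Tset_distinct n i \<times> Tset_distinct n i. 8 < 2 ^ e * card (shared_subsums (fst p) (snd p))}
        \<subseteq> (SIGMA t:Tset_distinct n i. \<Union>E\<in>\<E>. quads_spanned n i t E)"
  proof clarify
    fix t t' assume "t \<in> Tset_distinct n i" "t' \<in> Tset_distinct n i"
      and "8 < 2 ^ e * card (shared_subsums (fst (t, t')) (snd (t, t')))"
    then obtain E where "E \<subseteq> {..<4}" "card E \<le> e" "t' \<in> quads_spanned n i t E"
      using mem_quads_spanned by (metis fst_conv snd_conv)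
    then show "t' \<in> (\<Union>E\<in>\<E>. quads_spanned n i t E)" by (auto simp: \<E>_def)
  qed
  then have "card {p \<in> Tset_distinct n i \<times> Tset_distinct n i. 8 < 2 ^ e * card (shared_subsums (fst p) (snd p))}
      \<le> card (SIGMA t:Tset_distinct n i. \<Union>E\<in>\<E>. quads_spanned n i t E)"
    by (rule card_mono[rotated]) (simp add: finE finQ)
  also have "\<dots> = (\<Sum>t\<in>Tset_distinct n i. card (\<Union>E\<in>\<E>. quads_spanned n i t E))"
    by (rule card_SigmaI) (simp_all add: finE finQ)
  also have "\<dots> \<le> (\<Sum>t\<in>Tset_distinct n i. \<Sum>E\<in>\<E>. card (layer n i) ^ e * 256 ^ 4)"
  proof (intro sum_mono order_trans[OF card_UN_le[OF finE]])
    fix t E assume "E \<in> \<E>"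
    then have E: "E \<subseteq> {..<4}" "card E \<le> e" by (auto simp: \<E>_def)
    show "card (quads_spanned n i t E) \<le> card (layer n i) ^ e * 256 ^ 4"
      using card_quads_spanned[OF E(1)] power_increasing[OF E(2) l] by (meson le_trans mult_le_mono1)
  qed
  also have "\<dots> \<le> card (Tset_distinct n i) * (16 * 256 ^ 4 * card (layer n i) ^ e)"
    using cE by simp
  finally show ?thesis .
qed

lemma octet_kernel_excess_le:
  assumes tt: "t \<in> Tset_distinct n i" "t' \<in> Tset_distinct n i" and i: "0 < i"
  defines "w \<equiv> card (shared_subsums t t')"
  shows "(real (card (zero_subsums n (octet t t') {..<8})) / 256) ^ m - (1/64) ^ m
    \<le> of_bool (2 < w) * (1/32) ^ m + of_bool (4 < w) * (1/16) ^ m + of_bool (8 < w) * (1/8) ^ m"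
    (is "_ \<le> ?g")
proof -
  define x where "x = real (card (zero_subsums n (octet t t') {..<8})) / 256"
  have w16: "w \<le> 16"
    using card_mono[of "Pow {..<4::nat}" "shared_subsums t t'"]
    by (auto simp: w_def shared_subsums_def card_Pow)
  have "x \<le> 2 * real w / 256"
    using card_zero_subsums_octet[OF tt i] by (simp add: x_def w_def)
  then have pw: "x ^ m \<le> b ^ m" if "2 * real w / 256 \<le> b" for b
    using that by (intro power_mono) (simp_all add: x_def)
  have nn: "0 \<le> (1/64::real) ^ m" "0 \<le> (1/32::real) ^ m" "0 \<le> (1/16::real) ^ m"
    by simp_all
  consider "w \<le> 2" | "2 < w" "w \<le> 4" | "4 < w" "w \<le> 8" | "8 < w"
    by linarith
  then have "x ^ m - (1/64) ^ m \<le> ?g"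
  proof cases
    case 1
    have "x ^ m \<le> (1/64) ^ m" by (rule pw) (use 1 in simp)
    then show ?thesis using 1 by simp
  next
    case 2
    have "x ^ m \<le> (1/32) ^ m" by (rule pw) (use 2 in simp)
    moreover have "?g = (1/32) ^ m" using 2 by simp
    ultimately show ?thesis using nn by linarith
  next
    case 3
    have "x ^ m \<le> (1/16) ^ m" by (rule pw) (use 3 in simp)
    moreover have "?g = (1/32) ^ m + (1/16) ^ m" using 3 by simp
    ultimately show ?thesis using nn by linarith
  next
    case 4
    have "x ^ m \<le> (1/8) ^ m" by (rule pw) (use w16 in simp)
    moreover have "?g = (1/32) ^ m + (1/16) ^ m + (1/8) ^ m" using 4 by simp
    ultimately show ?thesis using nn by linarith
  qed
  then show ?thesis by (simp add: x_def)
qed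

text \<open>Pairs with \<open>|shared_subsums| \<le> 2\<close> contribute at most \<open>(1/64)^m\<close>, cancelling \<open>E[N]^2\<close>;
  each further doubling of \<open>shared_subsums\<close> doubles the contribution but, by
  \<open>card_pairs_shared_large\<close>, is shared by a factor \<open>|L_i|\<close> fewer pairs.\<close>
lemma VarN_le:
  assumes i: "0 < i" and l: "1 \<le> card (layer n i)"
  shows "VarN m n i \<le> 16 * 256 ^ 4 * real (card (Tset_distinct n i)) *
           (real (card (layer n i)) ^ 2 * (1/32) ^ m + real (card (layer n i)) * (1/16) ^ m + (1/8) ^ m)"
proof -
  let ?D = "Tset_distinct n i"
  let ?l = "card (layer n i)"
  define K :: real where "K = 16 * 256 ^ 4"
  define large where "large e p \<longleftrightarrow> 8 < 2 ^ e * card (shared_subsums (fst p) (snd p))" for e p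
  define g where "g p = of_bool (large 2 p) * (1/32::real) ^ m + of_bool (large 1 p) * (1/16) ^ m
                      + of_bool (large 0 p) * (1/8) ^ m" for p
  have term_le: "(real (card (zero_subsums n (octet t t') {..<8})) / 256) ^ m - (1/64) ^ m \<le> g (t, t')"
    if "t \<in> ?D" "t' \<in> ?D" for t t'
    using octet_kernel_excess_le[OF that i, of m] by (simp add: g_def large_def)
  have card_large: "real (card {p \<in> ?D \<times> ?D. large e p}) \<le> K * real (card ?D) * real ?l ^ e" for e
  proof -
    have "real (card {p \<in> ?D \<times> ?D. large e p}) \<le> real (card ?D * (16 * 256 ^ 4 * ?l ^ e))"
      unfolding large_def by (rule of_nat_mono[OF card_pairs_shared_large[OF l]])
    then show ?thesis by (simp add: K_def)
  qed
  have count: "(\<Sum>p\<in>?D \<times> ?D. of_bool (large e p) * c) = c * real (card {p \<in> ?D \<times> ?D. large e p})"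
    for e and c :: real
    by (simp add: Int_def)
  have "VarN m n i \<le> (\<Sum>t\<in>?D. \<Sum>t'\<in>?D. g (t, t'))"
    unfolding VarN_eq[OF i] by (intro sum_mono term_le)
  also have "\<dots> = (\<Sum>p\<in>?D \<times> ?D. g p)"
    by (simp add: sum.cartesian_product)
  also have "\<dots> = (1/32) ^ m * real (card {p \<in> ?D \<times> ?D. large 2 p})
      + (1/16) ^ m * real (card {p \<in> ?D \<times> ?D. large 1 p}) + (1/8) ^ m * real (card {p \<in> ?D \<times> ?D. large 0 p})"
    unfolding g_def sum.distrib count ..
  also have "\<dots> \<le> (1/32) ^ m * (K * real (card ?D) * real ?l ^ 2)
      + (1/16) ^ m * (K * real (card ?D) * real ?l ^ 1) + (1/8) ^ m * (K * real (card ?D) * real ?l ^ 0)"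
    by (intro add_mono mult_left_mono card_large) simp_all
  finally show ?thesis
    by (simp add: K_def algebra_simps)
qed

section \<open>Counting quadruples\<close>

lemma card_layer: "card (layer n i) = n choose i"
proof -
  have "bij_betw (\<lambda>x. {j. j < n \<and> x j}) (layer n i) {B. B \<subseteq> {..<n} \<and> card B = i}"
  proof (rule bij_betw_byWitness[where f' = "\<lambda>S j. j \<in> S"])
    show "\<forall>a\<in>layer n i. (\<lambda>j. j \<in> {j. j < n \<and> a j}) = a"
    proof
      fix a assume "a \<in> layer n i"
      then show "(\<lambda>j. j \<in> {j. j < n \<and> a j}) = a" by (auto simp: layer_def vecs_def fun_eq_iff) (meson not_le)
    qed
    show "\<forall>a'\<in>{B. B \<subseteq> {..<n} \<and> card B = i}. {j. j < n \<and> j \<in> a'} = a'" by auto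
    show "(\<lambda>x. {j. j < n \<and> x j}) ` layer n i \<subseteq> {B. B \<subseteq> {..<n} \<and> card B = i}"
      by (auto simp: layer_def)
    show "(\<lambda>S j. j \<in> S) ` {B. B \<subseteq> {..<n} \<and> card B = i} \<subseteq> layer n i"
    proof
      fix x assume "x \<in> (\<lambda>S j. j \<in> S) ` {B. B \<subseteq> {..<n} \<and> card B = i}"
      then obtain B where B: "B \<subseteq> {..<n}" "card B = i" "x = (\<lambda>j. j \<in> B)" by auto
      then have "{j. j < n \<and> x j} = B" by auto
      then show "x \<in> layer n i" using B by (auto simp: layer_def vecs_def)
    qed
  qed
  then show ?thesis using n_subsets[of "{..<n}" i] by (simp add: bij_betw_same_card)
qed

lemma card_Tset_le_cube: "card (Tset n i) \<le> card (layer n i) ^ 3"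
proof -
  have "Tset n i \<subseteq> (\<lambda>(a, b, c). (a, b, c, gf2_add (gf2_add a b) c)) ` (layer n i \<times> layer n i \<times> layer n i)"
  proof
    fix t assume "t \<in> Tset n i"
    then obtain a b c d where t: "t = (a, b, c, d)" "a \<in> layer n i" "b \<in> layer n i" "c \<in> layer n i"
      "sum4_zero a b c d" by (auto simp: Tset_def)
    have "d = gf2_add (gf2_add a b) c" using sum4_zero_last[OF t(5)] by (auto simp: gf2_add_def fun_eq_iff)
    then have "t = (\<lambda>(a, b, c). (a, b, c, gf2_add (gf2_add a b) c)) (a, b, c)" using t by simp
    moreover have "(a, b, c) \<in> layer n i \<times> layer n i \<times> layer n i" using t by simp
    ultimately show "t \<in> (\<lambda>(a, b, c). (a, b, c, gf2_add (gf2_add a b) c)) ` (layer n i \<times> layer n i \<times> layer n i)"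
      by blast
  qed
  then have "card (Tset n i) \<le> card ((\<lambda>(a, b, c). (a, b, c, gf2_add (gf2_add a b) c)) ` (layer n i \<times> layer n i \<times> layer n i))"
    by (rule card_mono[rotated]) simp
  also have "\<dots> \<le> card (layer n i \<times> layer n i \<times> layer n i)"
    by (rule card_image_le) simp
  finally have "card (Tset n i) \<le> card (layer n i \<times> layer n i \<times> layer n i)" .
  then show ?thesis by (simp add: card_cartesian_product power3_eq_cube)
qed

lemma card_Tset_le_Tset_distinct_plus: "card (Tset n i) \<le> card (Tset_distinct n i) + 3 * card (layer n i) ^ 2"
proof -
  let ?L = "layer n i"
  define f1 :: "bvec \<times> bvec \<Rightarrow> quad" where "f1 = (\<lambda>(a, b). (a, a, b, b))"
  define f2 :: "bvec \<times> bvec \<Rightarrow> quad" where "f2 = (\<lambda>(a, b). (a, b, a, b))"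
  define f3 :: "bvec \<times> bvec \<Rightarrow> quad" where "f3 = (\<lambda>(a, b). (a, b, b, a))"
  have "Tset n i \<subseteq> Tset_distinct n i \<union> (f1 ` (?L \<times> ?L) \<union> f2 ` (?L \<times> ?L) \<union> f3 ` (?L \<times> ?L))"
  proof
    fix t assume "t \<in> Tset n i"
    then obtain a b c d where t: "t = (a, b, c, d)" "a \<in> ?L" "b \<in> ?L" "c \<in> ?L" "d \<in> ?L"
      "sum4_zero a b c d" by (auto simp: Tset_def)
    have s: "\<And>j. d j = (a j \<noteq> (b j \<noteq> c j))" using sum4_zero_last[OF t(6)] .
    show "t \<in> Tset_distinct n i \<union> (f1 ` (?L \<times> ?L) \<union> f2 ` (?L \<times> ?L) \<union> f3 ` (?L \<times> ?L))"
    proof (cases "a \<noteq> b \<and> a \<noteq> c \<and> a \<noteq> d \<and> b \<noteq> c \<and> b \<noteq> d \<and> c \<noteq> d")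
      case True then show ?thesis using t by (auto simp: Tset_distinct_def)
    next
      case False
      have i1: "a = b \<Longrightarrow> c = d" "c = d \<Longrightarrow> a = b" "a = c \<Longrightarrow> b = d" "b = d \<Longrightarrow> a = c"
        "a = d \<Longrightarrow> b = c" "b = c \<Longrightarrow> a = d" using s by (auto simp: fun_eq_iff)
      from False consider "a = b \<and> c = d" | "a = c \<and> b = d" | "a = d \<and> b = c"
        using i1 by blast
      then show ?thesis
      proof cases
        case 1 then have "t = f1 (a, c)" using t by (simp add: f1_def)
        then show ?thesis using t by blast
      next
        case 2 then have "t = f2 (a, b)" using t by (simp add: f2_def)
        then show ?thesis using t by blast
      next
        case 3 then have "t = f3 (a, b)" using t by (simp add: f3_def)
        then show ?thesis using t by blast
      qed
    qed
  qed
  then have "card (Tset n i) \<le> card (Tset_distinct n i \<union> (f1 ` (?L \<times> ?L) \<union> f2 ` (?L \<times> ?L) \<union> f3 ` (?L \<times> ?L)))"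
    by (rule card_mono[rotated]) simp
  also have "\<dots> \<le> card (Tset_distinct n i) + (card (f1 ` (?L \<times> ?L)) + card (f2 ` (?L \<times> ?L)) + card (f3 ` (?L \<times> ?L)))"
    by (meson card_Un_le add_mono le_refl order_trans)
  also have "\<dots> \<le> card (Tset_distinct n i) + 3 * card ?L ^ 2"
  proof -
    have hh: "card (f ` (?L \<times> ?L)) \<le> card ?L ^ 2" for f :: "bvec \<times> bvec \<Rightarrow> quad"
      using card_image_le[of "?L \<times> ?L" f] by (simp add: card_cartesian_product power2_eq_square)
    show ?thesis using hh[of f1] hh[of f2] hh[of f3] by linarith
  qed
  finally show ?thesis .
qed

lemma card_Tset_distinct_lower:
  assumes i: "1 \<le> i" and n: "i + 1 \<le> n"
  shows "((n - 2) choose (i - 1)) * (((n - 2) choose (i - 1)) - 1) \<le> card (Tset_distinct n i)"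
proof -
  define ind :: "nat set \<Rightarrow> bvec" where "ind X = (\<lambda>j. j \<in> X)" for X
  define Cs where "Cs = {S. S \<subseteq> {2..<n} \<and> card S = i - 1}"
  define c where "c = (n - 2) choose (i - 1)"
  have cCs: "card Cs = c" unfolding Cs_def c_def using n_subsets[of "{2..<n}" "i - 1"] by simp
  have finCs: "finite Cs" unfolding Cs_def by (rule finite_subset[of _ "Pow {2..<n}"]) auto
  define Pairs where "Pairs = Cs \<times> Cs - (\<lambda>S. (S, S)) ` Cs"
  have cP: "card Pairs = c * c - c"
  proof -
    have "card ((\<lambda>S. (S, S)) ` Cs) = c" using cCs by (simp add: card_image inj_on_def)
    moreover have "(\<lambda>S. (S, S)) ` Cs \<subseteq> Cs \<times> Cs" by auto
    ultimately show ?thesis unfolding Pairs_def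
      by (simp add: card_Diff_subset finCs card_cartesian_product cCs)
  qed
  define \<phi> where "\<phi> = (\<lambda>(S, T). (ind (insert 0 S), ind (insert 1 S), ind (insert 0 T), ind (insert 1 T)))"
  have inj: "inj_on \<phi> Pairs"
  proof (rule inj_onI)
    fix p q assume p: "p \<in> Pairs" and q: "q \<in> Pairs" and e: "\<phi> p = \<phi> q"
    obtain S T S' T' where pq: "p = (S, T)" "q = (S', T')" by (cases p, cases q) auto
    have sub: "S \<subseteq> {2..<n}" "T \<subseteq> {2..<n}" "S' \<subseteq> {2..<n}" "T' \<subseteq> {2..<n}"
      using p q pq by (auto simp: Pairs_def Cs_def)
    have "insert 0 S = insert 0 S'" "insert 0 T = insert 0 T'"
      using e pq by (auto simp: \<phi>_def ind_def fun_eq_iff)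
    then have "S = S'" "T = T'" using sub by (auto simp: set_eq_iff) (metis atLeastLessThan_iff not_numeral_le_zero subsetD)+
    then show "p = q" using pq by simp
  qed
  have img: "\<phi> ` Pairs \<subseteq> Tset_distinct n i"
  proof
    fix x assume "x \<in> \<phi> ` Pairs"
    then obtain S T where ST: "S \<in> Cs" "T \<in> Cs" "S \<noteq> T" and x: "x = \<phi> (S, T)"
      unfolding Pairs_def by auto
    have sub: "S \<subseteq> {2..<n}" "T \<subseteq> {2..<n}" and cS: "card S = i - 1" "card T = i - 1"
      using ST by (auto simp: Cs_def)
    have lay: "ind (insert a X) \<in> layer n i" if "X \<subseteq> {2..<n}" "card X = i - 1" "a < 2" for a X
    proof -
      have "a \<notin> X" using that by auto
      moreover have "finite X" using that(1) finite_subset by auto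
      moreover have "{j. j < n \<and> ind (insert a X) j} = insert a X"
        using that n i by (auto simp: ind_def)
      ultimately show ?thesis using that n i
        by (auto simp: layer_def vecs_def ind_def)
    qed
    have neq: "ind (insert a S) \<noteq> ind (insert b T)" if "a < 2" "b < 2" for a b
    proof
      assume "ind (insert a S) = ind (insert b T)"
      then have "insert a S = insert b T" by (auto simp: ind_def fun_eq_iff)
      then have "S = T" using sub that by (auto simp: set_eq_iff) (metis atLeastLessThan_iff not_le subsetD)+
      then show False using ST(3) by simp
    qed
    have "ind (insert 0 S) \<noteq> ind (insert 1 S)" "ind (insert 0 T) \<noteq> ind (insert 1 T)"
      "ind (insert 1 S) \<noteq> ind (insert 0 T)" "ind (insert 0 S) \<noteq> ind (insert 1 T)"
      using sub by (auto simp: ind_def fun_eq_iff)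
    moreover have "sum4_zero (ind (insert 0 S)) (ind (insert 1 S)) (ind (insert 0 T)) (ind (insert 1 T))"
      using sub by (auto simp: sum4_zero_def ind_def)
    ultimately show "x \<in> Tset_distinct n i"
      using lay[OF sub(1) cS(1)] lay[OF sub(2) cS(2)] neq[of 0 0] neq[of 1 1]
      by (auto simp: x \<phi>_def Tset_distinct_def)
  qed
  have "card (\<phi> ` Pairs) \<le> card (Tset_distinct n i)" by (rule card_mono[OF _ img]) simp
  moreover have "card (\<phi> ` Pairs) = c * c - c" using card_image[OF inj] cP by simp
  ultimately show ?thesis by (simp add: c_def diff_mult_distrib2)
qed

lemma binomial_le_binomial_diff2:
  assumes "1 \<le> i" "i < n"
  shows "n choose i \<le> n ^ 2 * ((n - 2) choose (i - 1))"
proof -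
  have a: "i * (n choose i) = n * ((n - 1) choose (i - 1))"
    using times_binomial_minus1_eq[of i n] assms by simp
  have b: "(n - 1 - (i - 1)) * ((n - 1) choose (i - 1)) = (n - 1) * ((n - 1 - 1) choose (i - 1))"
    by (rule binomial_absorb_comp)
  have nn: "n - 1 - (i - 1) = n - i" "n - 1 - 1 = n - 2" using assms by auto
  have "i * (n - i) * (n choose i) = n * (n - 1) * ((n - 2) choose (i - 1))"
    using a b nn by (metis mult.assoc mult.commute)
  moreover have "1 \<le> i * (n - i)" using assms by simp
  ultimately have "n choose i \<le> n * (n - 1) * ((n - 2) choose (i - 1))"
    by (metis mult_le_mono1 mult_1)
  also have "\<dots> \<le> n ^ 2 * ((n - 2) choose (i - 1))"
    by (intro mult_le_mono1) (simp add: power2_eq_square)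
  finally show ?thesis .
qed

lemma two_le_binomial_diff2:
  assumes "2 \<le> i" "i + 2 \<le> n"
  shows "2 \<le> (n - 2) choose (i - 1)"
proof -
  obtain N k where Nk: "n - 2 = Suc N" "i - 1 = Suc k" "k \<le> N" "Suc k \<le> N"
    using assms by (intro that[of "n - 3" "i - 2"]) auto
  have e: "Suc N choose Suc k = (N choose k) + (N choose Suc k)" by simp
  have "0 < N choose k" "0 < N choose Suc k" using Nk by (simp_all add: zero_less_binomial)
  then have "2 \<le> Suc N choose Suc k" unfolding e by linarith
  then show ?thesis using Nk by simp
qed

lemma card_Tset_le_Tset_distinct:
  assumes "2 \<le> i" "i + 2 \<le> n"
  shows "2 \<le> card (Tset_distinct n i)" "card (Tset n i) \<le> (1 + 6 * n ^ 4) * card (Tset_distinct n i)"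
proof -
  define c where "c = (n - 2) choose (i - 1)"
  have c2: "2 \<le> c" using two_le_binomial_diff2[OF assms] by (simp add: c_def)
  have D: "c * (c - 1) \<le> card (Tset_distinct n i)"
    using card_Tset_distinct_lower[of i n] assms by (simp add: c_def)
  obtain k where k: "c = Suc (Suc k)" using c2 by (metis add_2_eq_Suc le_Suc_ex)
  have "2 \<le> c * (c - 1)" using k by simp
  then show "2 \<le> card (Tset_distinct n i)" using D by simp
  have "card (layer n i) \<le> n ^ 2 * c"
    unfolding card_layer c_def by (rule binomial_le_binomial_diff2) (use assms in auto)
  then have "card (layer n i) ^ 2 \<le> (n ^ 2 * c) ^ 2" by (rule power_mono) simp
  also have "\<dots> = n ^ 4 * c ^ 2" by (simp add: power_mult_distrib power_mult[symmetric])
  also have "c ^ 2 \<le> 2 * (c * (c - 1))" using k by (simp add: power2_eq_square)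
  then have "n ^ 4 * c ^ 2 \<le> n ^ 4 * (2 * (c * (c - 1)))" by simp
  also have "\<dots> \<le> 2 * n ^ 4 * card (Tset_distinct n i)" using D by simp
  finally have "card (layer n i) ^ 2 \<le> 2 * n ^ 4 * card (Tset_distinct n i)" .
  then show "card (Tset n i) \<le> (1 + 6 * n ^ 4) * card (Tset_distinct n i)"
    using card_Tset_le_Tset_distinct_plus[of n i] by (simp add: algebra_simps)
qed

lemma log_binomial_le_entropy:
  assumes "0 < i" "i < n"
  shows "log 2 (real (n choose i)) \<le> real n * h (real i / real n)"
proof -
  define g where "g = real i / real n"
  have g: "0 < g" "g < 1" using assms by (auto simp: g_def)
  have "1 = (g + (1 - g)) ^ n" by simp
  also have "\<dots> = (\<Sum>k\<le>n. real (n choose k) * g ^ k * (1 - g) ^ (n - k))"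
    by (rule binomial_ring)
  also have "\<dots> \<ge> real (n choose i) * g ^ i * (1 - g) ^ (n - i)"
    by (rule member_le_sum[of i "{..n}" "\<lambda>k. real (n choose k) * g ^ k * (1 - g) ^ (n - k)"])
       (use assms g in auto)
  finally have le1: "real (n choose i) * g ^ i * (1 - g) ^ (n - i) \<le> 1" .
  have pos: "0 < real (n choose i)" using assms by simp
  have X: "0 < real (n choose i) * g ^ i * (1 - g) ^ (n - i)" using pos g by simp
  have "log 2 (real (n choose i) * g ^ i * (1 - g) ^ (n - i)) \<le> 0"
    using log_le_zero_cancel_iff[of 2, OF _ X] le1 by simp
  moreover have "log 2 (real (n choose i) * g ^ i * (1 - g) ^ (n - i))
      = log 2 (real (n choose i)) + log 2 (g ^ i) + log 2 ((1 - g) ^ (n - i))"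
    using pos g by (simp add: log_mult)
  moreover have "log 2 (g ^ i) = real i * log 2 g" "log 2 ((1 - g) ^ (n - i)) = real (n - i) * log 2 (1 - g)"
    using g by (simp_all add: log_nat_power)
  ultimately have A: "log 2 (real (n choose i)) + real i * log 2 g + real (n - i) * log 2 (1 - g) \<le> 0"
    by simp
  have "real n * h g = - (real i * log 2 g) - real (n - i) * log 2 (1 - g)"
  proof -
    have e1: "real n * g = real i" "real n * (1 - g) = real (n - i)" using assms by (auto simp: g_def field_simps)
    have e2: "log 2 (1 / g) = - log 2 g" "log 2 (1 / (1 - g)) = - log 2 (1 - g)"
      using g by (simp_all add: log_divide)
    have "real n * h g = (real n * g) * log 2 (1 / g) + (real n * (1 - g)) * log 2 (1 / (1 - g))"
      unfolding h_def by (simp add: algebra_simps)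
    then show ?thesis unfolding e1 e2 by simp
  qed
  with A
  show ?thesis unfolding g_def[symmetric] by linarith
qed

section \<open>The exponent \<open>\<psi>(4,\<gamma>)\<close>\<close>

definition vconcat :: "nat \<Rightarrow> bvec \<Rightarrow> bvec \<Rightarrow> bvec" where
  "vconcat n1 x y = (\<lambda>j. if j < n1 then x j else y (j - n1))"

lemma vconcat_layer:
  assumes x: "x \<in> layer n1 i1" and y: "y \<in> layer n2 i2"
  shows "vconcat n1 x y \<in> layer (n1 + n2) (i1 + i2)"
proof -
  have vy: "y \<in> vecs n2" using y by (simp add: layer_def)
  have "vconcat n1 x y \<in> vecs (n1 + n2)" using vy by (auto simp: vecs_def vconcat_def)
  moreover have "{j. j < n1 + n2 \<and> vconcat n1 x y j} = {j. j < n1 \<and> x j} \<union> (\<lambda>j. j + n1) ` {j. j < n2 \<and> y j}"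
  proof (rule set_eqI)
    fix j show "j \<in> {j. j < n1 + n2 \<and> vconcat n1 x y j} \<longleftrightarrow> j \<in> {j. j < n1 \<and> x j} \<union> (\<lambda>j. j + n1) ` {j. j < n2 \<and> y j}"
    proof (cases "j < n1")
      case False
      then show ?thesis by (auto simp: vconcat_def image_iff intro!: exI[of _ "j - n1"])
    qed (auto simp: vconcat_def)
  qed
  moreover have "card ({j. j < n1 \<and> x j} \<union> (\<lambda>j. j + n1) ` {j. j < n2 \<and> y j}) = i1 + i2"
  proof -
    have "card ((\<lambda>j. j + n1) ` {j. j < n2 \<and> y j}) = i2"
      using y by (simp add: card_image layer_def)
    moreover have "card {j. j < n1 \<and> x j} = i1" using x by (simp add: layer_def)
    ultimately show ?thesis by (subst card_Un_disjoint) auto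
  qed
  ultimately show ?thesis by (simp add: layer_def)
qed

lemma vconcat_inj:
  assumes "x \<in> vecs n1" "x' \<in> vecs n1" "vconcat n1 x y = vconcat n1 x' y'"
  shows "x = x'" "y = y'"
proof -
  show "x = x'"
  proof
    fix j show "x j = x' j"
    proof (cases "j < n1")
      case True then show ?thesis using fun_cong[OF assms(3), of j] by (simp add: vconcat_def)
    next
      case False then show ?thesis using assms(1,2) by (simp add: vecs_def)
    qed
  qed
  show "y = y'"
  proof
    fix j show "y j = y' j" using fun_cong[OF assms(3), of "j + n1"] by (simp add: vconcat_def)
  qed
qed

lemma card_Tset_supermult:
  "card (Tset n1 i1) * card (Tset n2 i2) \<le> card (Tset (n1 + n2) (i1 + i2))"
proof -
  define \<Psi> where "\<Psi> = (\<lambda>((a, b, c, d), (a', b', c', d')). (vconcat n1 a a', vconcat n1 b b', vconcat n1 c c', vconcat n1 d d'))"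
  have inj: "inj_on \<Psi> (Tset n1 i1 \<times> Tset n2 i2)"
  proof (rule inj_onI)
    fix p q assume hp: "p \<in> Tset n1 i1 \<times> Tset n2 i2" and hq: "q \<in> Tset n1 i1 \<times> Tset n2 i2"
      and hpq: "\<Psi> p = \<Psi> q"
    obtain a b c d a' b' c' d' where p: "p = ((a, b, c, d), (a', b', c', d'))" by (metis prod.collapse)
    obtain e f g k e' f' g' k' where q: "q = ((e, f, g, k), (e', f', g', k'))" by (metis prod.collapse)
    have v: "a \<in> vecs n1" "b \<in> vecs n1" "c \<in> vecs n1" "d \<in> vecs n1"
      "e \<in> vecs n1" "f \<in> vecs n1" "g \<in> vecs n1" "k \<in> vecs n1"
      using hp hq p q by (auto simp: Tset_def layer_def)
    have eq: "vconcat n1 a a' = vconcat n1 e e'" "vconcat n1 b b' = vconcat n1 f f'" "vconcat n1 c c' = vconcat n1 g g'"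
      "vconcat n1 d d' = vconcat n1 k k'" using hpq p q by (auto simp: \<Psi>_def)
    show "p = q"
      using vconcat_inj[OF v(1) v(5) eq(1)] vconcat_inj[OF v(2) v(6) eq(2)] vconcat_inj[OF v(3) v(7) eq(3)]
        vconcat_inj[OF v(4) v(8) eq(4)] p q by simp
  qed
  have img: "\<Psi> ` (Tset n1 i1 \<times> Tset n2 i2) \<subseteq> Tset (n1 + n2) (i1 + i2)"
  proof
    fix x assume "x \<in> \<Psi> ` (Tset n1 i1 \<times> Tset n2 i2)"
    then obtain p where hp: "p \<in> Tset n1 i1 \<times> Tset n2 i2" and x: "x = \<Psi> p" by blast
    obtain a b c d a' b' c' d' where p: "p = ((a, b, c, d), (a', b', c', d'))" by (metis prod.collapse)
    have h: "(a, b, c, d) \<in> Tset n1 i1" "(a', b', c', d') \<in> Tset n2 i2" using hp p by auto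
    then have s: "sum4_zero (vconcat n1 a a') (vconcat n1 b b') (vconcat n1 c c') (vconcat n1 d d')"
      by (auto simp: Tset_def sum4_zero_def vconcat_def)
    show "x \<in> Tset (n1 + n2) (i1 + i2)"
      using h s by (auto simp: x p Tset_def \<Psi>_def intro!: vconcat_layer)
  qed
  have "card (Tset n1 i1 \<times> Tset n2 i2) = card (\<Psi> ` (Tset n1 i1 \<times> Tset n2 i2))"
    using card_image[OF inj] by simp
  also have "\<dots> \<le> card (Tset (n1 + n2) (i1 + i2))" by (rule card_mono[OF _ img]) simp
  finally show ?thesis by (simp add: card_cartesian_product)
qed

lemma card_Tset_pos: "i \<le> n \<Longrightarrow> 1 \<le> card (Tset n i)"
proof -
  assume "i \<le> n"
  then have "card (layer n i) > 0" by (simp add: card_layer)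
  then obtain u where u: "u \<in> layer n i" by (metis card_gt_0_iff ex_in_conv)
  have "(u, u, u, u) \<in> Tset n i" using u by (simp add: Tset_def sum4_zero_def)
  then have "Tset n i \<noteq> {}" by blast
  then show ?thesis by (simp add: Suc_le_eq card_gt_0_iff)
qed

lemma card_Tset_le_pow: "card (Tset n i) \<le> 2 ^ (3 * n)"
proof -
  have "card (layer n i) \<le> 2 ^ n"
    using card_mono[of "vecs n" "layer n i"] card_vecs by (auto simp: layer_def)
  then have "card (layer n i) ^ 3 \<le> (2 ^ n) ^ 3" by (rule power_mono) simp
  then show ?thesis using card_Tset_le_cube[of n i] by (simp add: power_mult[symmetric] mult.commute)
qed

lemma superadditive_iterate:
  fixes f :: "nat \<Rightarrow> real"
  assumes super: "\<And>a b. f a + f b \<le> f (a + b)"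
  shows "real s * f p + f t \<le> f (s * p + t)"
proof (induction s)
  case 0 then show ?case by simp
next
  case (Suc s)
  have "real (Suc s) * f p + f t = f p + (real s * f p + f t)" by (simp add: algebra_simps)
  also have "\<dots> \<le> f p + f (s * p + t)" using Suc by simp
  also have "\<dots> \<le> f (p + (s * p + t))" by (rule super)
  finally show ?case by (simp add: add.assoc)
qed

lemma superadditive_ratio_lower:
  fixes f :: "nat \<Rightarrow> real"
  assumes super: "\<And>a b. f a + f b \<le> f (a + b)" and nonneg: "\<And>k. 0 \<le> f k"
    and "0 < p" "0 < k"
  shows "f p / real p - f p / real k \<le> f k / real k"
proof -
  define s where "s = k div p"
  have sp: "real s * real p \<ge> real k - real p"
  proof -
    have "k = s * p + k mod p" by (simp add: s_def)
    moreover have "k mod p < p" using assms(3) by simp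
    ultimately have "k < s * p + p" by linarith
    then have "real k < real s * real p + real p" by (metis of_nat_add of_nat_mult of_nat_less_iff)
    then show ?thesis by linarith
  qed
  have fk: "real s * f p \<le> f k"
  proof -
    have "real s * f p + f (k mod p) \<le> f (s * p + k mod p)" by (rule superadditive_iterate[OF super])
    moreover have "s * p + k mod p = k" by (simp add: s_def)
    ultimately show ?thesis using nonneg[of "k mod p"] by simp
  qed
  have kpos: "0 < real k" and ppos: "0 < real p" using assms(3,4) by simp_all
  have "f p / real p * (real k - real p) \<le> f p / real p * (real s * real p)"
    using sp nonneg[of p] ppos by (intro mult_left_mono) auto
  also have "\<dots> = real s * f p" using ppos by simp
  finally have "f p / real p * (real k - real p) \<le> f k" using fk by linarith
  then have "f p / real p * (real k - real p) / real k \<le> f k / real k"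
    using kpos by (intro divide_right_mono) auto
  moreover have "f p / real p * (real k - real p) / real k = f p / real p - f p / real k"
    using kpos ppos by (simp add: field_simps)
  ultimately show ?thesis by simp
qed

lemma fekete_superadditive:
  fixes f :: "nat \<Rightarrow> real"
  assumes super: "\<And>a b. f a + f b \<le> f (a + b)" and nonneg: "\<And>k. 0 \<le> f k"
    and bnd: "\<And>k. f k \<le> C * real k"
  shows "(\<lambda>k. f k / real k) \<longlonglongrightarrow> (SUP k\<in>{1..}. f k / real k)"
proof -
  define S where "S = (SUP k\<in>{1..}. f k / real k)"
  have bdd: "bdd_above ((\<lambda>k. f k / real k) ` {1..})"
  proof (rule bdd_aboveI2)
    fix k :: nat assume "k \<in> {1..}"
    then show "f k / real k \<le> C" using bnd[of k] by (simp add: divide_le_eq mult.commute)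
  qed
  have up: "f k / real k \<le> S" if "1 \<le> k" for k
    unfolding S_def by (rule cSUP_upper[OF _ bdd]) (use that in auto)
  show ?thesis unfolding S_def[symmetric]
  proof (rule metric_LIMSEQ_I)
    fix r :: real assume r: "0 < r"
    have "S - r / 2 < S" using r by simp
    then obtain p where p: "p \<in> {1..}" "S - r / 2 < f p / real p"
      unfolding S_def using less_cSUP_iff[OF _ bdd] by (metis empty_iff atLeast_iff order_refl)
    have p1: "1 \<le> p" using p by simp
    obtain K :: nat where K: "real K > 2 * C * real p / r" using reals_Archimedean2 by blast
    show "\<exists>no. \<forall>k\<ge>no. dist (f k / real k) S < r"
    proof (intro exI[of _ "max (max p 1) (K + 1)"] allI impI)
      fix k assume k: "max (max p 1) (K + 1) \<le> k"
      then have k1: "1 \<le> k" "p \<le> k" "K < k" by auto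
      have kpos: "0 < real k" using k1 by simp
      have "f p / real p - f p / real k \<le> f k / real k"
        using superadditive_ratio_lower[OF super nonneg, of p k] p1 k1 by simp
      moreover have "f p / real k \<le> C * real p / real k"
        using bnd[of p] kpos by (simp add: divide_right_mono)
      moreover have "C * real p / real k < r / 2"
      proof -
        have "2 * C * real p / r < real k" using K k1(3) by linarith
        then have "2 * C * real p < r * real k" using r by (simp add: divide_less_eq mult.commute)
        then show ?thesis using kpos by (simp add: divide_less_eq)
      qed
      ultimately have "S - r < f k / real k" using p(2) by linarith
      moreover have "f k / real k \<le> S" using up k1 by simp
      ultimately show "dist (f k / real k) S < r" by (simp add: dist_real_def)
    qed
  qed
qed

lemma int_seq_nonbot:
  assumes "int_seq S \<noteq> bot"
  shows "\<exists>n>0. \<forall>a\<in>S. a * real n \<in> \<int>"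
proof (rule ccontr)
  assume "\<not> ?thesis"
  then have "\<forall>n\<ge>1. n \<in> {n. \<forall>a\<in>S. a * real n \<in> \<int>} \<longrightarrow> False"
  proof (intro allI impI)
    fix n :: nat assume "1 \<le> n" "n \<in> {n. \<forall>a\<in>S. a * real n \<in> \<int>}"
    then have "0 < n" "\<forall>a\<in>S. a * real n \<in> \<int>" by auto
    then show False using \<open>\<not> (\<exists>n>0. \<forall>a\<in>S. a * real n \<in> \<int>)\<close> by blast
  qed
  then have "\<forall>\<^sub>F n in sequentially. n \<in> {n. \<forall>a\<in>S. a * real n \<in> \<int>} \<longrightarrow> False"
    unfolding eventually_sequentially by blast
  then have "eventually (\<lambda>_. False) (int_seq S)"
    unfolding int_seq_def eventually_inf_principal .
  then show False using assms by (simp add: trivial_limit_def[symmetric] eventually_False)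
qed

lemma int_seq_neq_bot_iff: "int_seq S \<noteq> bot \<longleftrightarrow> (\<exists>n>0. \<forall>a\<in>S. a * real n \<in> \<int>)"
proof
  assume "int_seq S \<noteq> bot"
  then show "\<exists>n>0. \<forall>a\<in>S. a * real n \<in> \<int>" by (rule int_seq_nonbot)
next
  assume "\<exists>n>0. \<forall>a\<in>S. a * real n \<in> \<int>"
  then obtain n0 where n0: "0 < n0" "\<forall>a\<in>S. a * real n0 \<in> \<int>" by blast
  have "\<forall>a\<in>S. a * real (k * n0) \<in> \<int>" for k
  proof
    fix a assume "a \<in> S"
    then have "a * real n0 \<in> \<int>" using n0(2) by blast
    then have "real k * (a * real n0) \<in> \<int>" by (rule Ints_mult[OF Ints_of_nat])
    then show "a * real (k * n0) \<in> \<int>" by (simp add: algebra_simps)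
  qed
  moreover have "k \<le> k * n0" for k using n0(1) by simp
  ultimately have "\<not> eventually (\<lambda>_. False) (int_seq S)"
    unfolding int_seq_def eventually_inf_principal eventually_sequentially by blast
  then show "int_seq S \<noteq> bot" by auto
qed

lemma int_seq_mono: "S \<subseteq> T \<Longrightarrow> int_seq T \<le> int_seq S"
  unfolding int_seq_def by (intro inf_mono order_refl) auto

lemma Ints_mult_iff_dvd:
  fixes \<gamma> :: real
  assumes n0: "0 < n0" "\<gamma> * real n0 \<in> \<int>"
  obtains q where "0 < q" "\<And>n. \<gamma> * real n \<in> \<int> \<longleftrightarrow> q dvd n"
proof -
  define N where "N = {n::nat. \<gamma> * real n \<in> \<int>}"
  define q where "q = (LEAST n. 0 < n \<and> n \<in> N)"
  have qN: "0 < q" "q \<in> N" using LeastI[of "\<lambda>n. 0 < n \<and> n \<in> N" n0] n0 by (auto simp: q_def N_def)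
  have qmin: "n \<in> N \<Longrightarrow> 0 < n \<Longrightarrow> q \<le> n" for n using Least_le[of "\<lambda>n. 0 < n \<and> n \<in> N"] by (auto simp: q_def)
  have NN: "n \<in> N \<longleftrightarrow> q dvd n" for n
  proof
    assume n: "n \<in> N"
    have "\<gamma> * real (n mod q) = \<gamma> * real n - real (n div q) * (\<gamma> * real q)"
    proof -
      have "real n = real (n div q * q + n mod q)" by simp
      also have "\<dots> = real (n div q) * real q + real (n mod q)" by (simp only: of_nat_add of_nat_mult)
      finally have "real n = real (n div q) * real q + real (n mod q)" .
      then show ?thesis by (simp add: algebra_simps)
    qed
    moreover have "real (n div q) * (\<gamma> * real q) \<in> \<int>" using qN(2) by (simp add: N_def)
    moreover have "\<gamma> * real n \<in> \<int>" using n by (simp add: N_def)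
    ultimately have "\<gamma> * real (n mod q) \<in> \<int>" using Ints_diff by simp
    then have "n mod q \<in> N" unfolding N_def by simp
    moreover have "n mod q < q" using qN(1) by simp
    ultimately have "n mod q = 0" using qmin by (meson leD not_gr_zero)
    then show "q dvd n" by (simp add: dvd_eq_mod_eq_0)
  next
    assume "q dvd n"
    then obtain k where "n = q * k" by blast
    then have e: "\<gamma> * real n = real k * (\<gamma> * real q)" by (simp add: algebra_simps)
    have "real k \<in> \<int>" by simp
    moreover have "\<gamma> * real q \<in> \<int>" using qN(2) unfolding N_def by simp
    ultimately have "real k * (\<gamma> * real q) \<in> \<int>" by (rule Ints_mult)
    then show "n \<in> N" unfolding N_def mem_Collect_eq e .
  qed
  show ?thesis by (rule that[OF qN(1)]) (use NN in \<open>simp add: N_def\<close>)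
qed

lemma tendsto_int_seq_multiples:
  fixes g :: "nat \<Rightarrow> real"
  assumes q: "0 < q" "\<And>n. \<gamma> * real n \<in> \<int> \<longleftrightarrow> q dvd n"
    and lim: "(\<lambda>k. g (k * q)) \<longlonglongrightarrow> L"
  shows "(g \<longlongrightarrow> L) (int_seq {\<gamma>})"
proof (rule tendstoI)
  fix e :: real assume "0 < e"
  then obtain K where K: "\<And>k. K \<le> k \<Longrightarrow> dist (g (k * q)) L < e"
    using lim[unfolded lim_sequentially] by blast
  have "dist (g n) L < e" if n: "K * q \<le> n" "q dvd n" for n
  proof -
    obtain k where k: "n = k * q" using n(2) by (metis dvd_def mult.commute)
    then have "K \<le> k" using n(1) q(1) by simp
    then show ?thesis using K k by simp
  qed
  then show "\<forall>\<^sub>F n in int_seq {\<gamma>}. dist (g n) L < e"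
    unfolding int_seq_def eventually_inf_principal eventually_sequentially using q(2) by auto
qed

lemma log_card_Tset_multiples:
  assumes "p \<le> q"
  defines "f \<equiv> \<lambda>k. log 2 (real (card (Tset (k * q) (k * p))))"
  shows "\<And>a b. f a + f b \<le> f (a + b)" "\<And>k. 0 \<le> f k" "\<And>k. f k \<le> (3 * real q) * real k"
proof -
  have T1: "1 \<le> real (card (Tset (k * q) (k * p)))" for k
    using card_Tset_pos[of "k * p" "k * q"] assms(1) by simp
  show "f a + f b \<le> f (a + b)" for a b
  proof -
    have "real (card (Tset (a * q) (a * p))) * real (card (Tset (b * q) (b * p)))
        \<le> real (card (Tset ((a + b) * q) ((a + b) * p)))"
      using card_Tset_supermult[of "a * q" "a * p" "b * q" "b * p"]
      by (simp add: algebra_simps) (metis of_nat_le_iff of_nat_mult)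
    then have "log 2 (real (card (Tset (a * q) (a * p))) * real (card (Tset (b * q) (b * p))))
        \<le> f (a + b)"
      unfolding f_def using T1[of a] T1[of b] by (intro log_mono) (simp_all add: order_less_le_trans[OF zero_less_one])
    then show ?thesis unfolding f_def using T1[of a] T1[of b] by (simp add: log_mult Suc_le_eq card_gt_0_iff)
  qed
  show "0 \<le> f k" for k unfolding f_def using T1[of k] by simp
  show "f k \<le> (3 * real q) * real k" for k
  proof -
    have "real (card (Tset (k * q) (k * p))) \<le> 2 ^ (3 * (k * q))"
      using card_Tset_le_pow[of "k * q" "k * p"] by (simp flip: of_nat_le_iff)
    then have "f k \<le> log 2 (2 ^ (3 * (k * q)))" unfolding f_def using T1[of k]
      by (intro log_mono) auto
    also have "\<dots> = 3 * real q * real k" by (simp add: log_nat_power)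
    finally show ?thesis .
  qed
qed

text \<open>Concatenation makes \<open>n \<mapsto> log |Tset n (\<gamma> n)|\<close> superadditive along the multiples
  of the period, so Fekete's lemma gives the limit defining \<open>\<psi>(4,\<gamma>)\<close>.\<close>
lemma tendsto_log_card_Tset:
  fixes \<gamma> :: real
  assumes g: "0 < \<gamma>" "\<gamma> \<le> 1"
  shows "((\<lambda>n. log 2 (real (card (Tset n (nat \<lfloor>\<gamma> * real n\<rfloor>)))) / real n) \<longlongrightarrow> psi4 \<gamma> + 2 * h \<gamma>) (int_seq {\<gamma>})"
proof (cases "int_seq {\<gamma>} = bot")
  case False
  then obtain n0 where n0: "0 < n0" "\<gamma> * real n0 \<in> \<int>" unfolding int_seq_neq_bot_iff by auto
  obtain q where q: "0 < q" "\<And>n. \<gamma> * real n \<in> \<int> \<longleftrightarrow> q dvd n"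
    using Ints_mult_iff_dvd[OF n0] by blast
  obtain p :: nat where p: "\<gamma> * real q = real p"
  proof -
    obtain z where z: "\<gamma> * real q = of_int z" using q(2)[of q] by (auto elim!: Ints_cases)
    have "0 \<le> z" using z g by (metis mult_nonneg_nonneg less_imp_le of_int_0_le_iff of_nat_0_le_iff)
    then show ?thesis using that[of "nat z"] z by simp
  qed
  have "\<gamma> * real q \<le> 1 * real q" using g by (intro mult_right_mono) auto
  then have pq: "p \<le> q" using p by simp
  define T where "T n = real (card (Tset n (nat \<lfloor>\<gamma> * real n\<rfloor>)))" for n
  have Tk: "T (k * q) = real (card (Tset (k * q) (k * p)))" for k
  proof -
    have e: "\<gamma> * real (k * q) = real (k * p)" using p by (simp add: algebra_simps)
    show ?thesis unfolding T_def e floor_of_nat nat_int ..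
  qed
  define f where "f k = log 2 (real (card (Tset (k * q) (k * p))))" for k
  note f = log_card_Tset_multiples[OF pq, folded f_def]
  define S where "S = (SUP k\<in>{1..}. f k / real k)"
  have lim: "(\<lambda>k. f k / real k) \<longlonglongrightarrow> S" unfolding S_def by (rule fekete_superadditive[OF f])
  have "(\<lambda>k. log 2 (T (k * q)) / real (k * q)) \<longlonglongrightarrow> S / real q"
    using tendsto_divide[OF lim tendsto_const[of "real q"]] q(1) by (simp add: f_def Tk field_simps)
  then have conv: "((\<lambda>n. log 2 (T n) / real n) \<longlongrightarrow> S / real q) (int_seq {\<gamma>})"
    by (rule tendsto_int_seq_multiples[OF q])
  have "psi4 \<gamma> = S / real q - 2 * h \<gamma>"
    unfolding psi4_def T_def[symmetric] by (rule tendsto_Lim[OF False tendsto_diff[OF conv tendsto_const]])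
  then show ?thesis using conv unfolding T_def by simp
qed simp

section \<open>Asymptotics\<close>

lemma log_poly_over_n_tendsto_0: "((\<lambda>n::nat. log 2 (1 + 6 * real n ^ 4) / real n) \<longlongrightarrow> 0) sequentially"
  by real_asymp

lemma VarN_le_Tset:
  assumes "0 < i" "i \<le> n"
  shows "VarN m n i \<le> 16 * 256 ^ 4 * real (card (Tset n i)) * (real (card (layer n i)) ^ 2 / 2 ^ (5 * m)
           + real (card (layer n i)) / 2 ^ (4 * m) + 1 / 2 ^ (3 * m))"
proof -
  define L where "L = real (card (layer n i))"
  have l: "1 \<le> card (layer n i)" using assms by (simp add: card_layer Suc_le_eq)
  have DT: "real (card (Tset_distinct n i)) \<le> real (card (Tset n i))"
    using card_mono[OF finite_Tset Tset_distinct_subset] by simp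
  have "VarN m n i \<le> 16 * 256 ^ 4 * real (card (Tset_distinct n i)) *
      (L ^ 2 * (1/32) ^ m + L * (1/16) ^ m + (1/8) ^ m)"
    unfolding L_def by (rule VarN_le[OF assms(1) l])
  also have "\<dots> \<le> 16 * 256 ^ 4 * real (card (Tset n i)) * (L ^ 2 * (1/32) ^ m + L * (1/16) ^ m + (1/8) ^ m)"
    using DT by (intro mult_right_mono) (simp_all add: L_def)
  also have "\<dots> = 16 * 256 ^ 4 * real (card (Tset n i)) * (L ^ 2 / 2 ^ (5 * m) + L / 2 ^ (4 * m) + 1 / 2 ^ (3 * m))"
    by (simp add: power_mult power_one_over)
  finally show ?thesis unfolding L_def .
qed

lemma log_le_of_le_sum3:
  fixes V K T x1 x2 x3 Y :: real
  assumes V: "0 \<le> V" "V \<le> K * T * (x1 + x2 + x3)" and pos: "0 < K" "0 < T" "0 < x1" "0 < x2" "0 < x3"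
    and b: "log 2 (3 * K) + log 2 T + log 2 x1 \<le> Y" "log 2 (3 * K) + log 2 T + log 2 x2 \<le> Y"
           "log 2 (3 * K) + log 2 T + log 2 x3 \<le> Y"
  shows "V = 0 \<or> log 2 V \<le> Y"
proof -
  have one: "3 * K * T * x \<le> 2 powr Y" if "0 < x" "log 2 (3 * K) + log 2 T + log 2 x \<le> Y" for x
  proof -
    have p: "0 < 3 * K * T * x" using pos that by simp
    have "log 2 (3 * K * T * x) = log 2 (3 * K) + log 2 T + log 2 x"
      using pos that by (simp add: log_mult)
    then have "log 2 (3 * K * T * x) \<le> Y" using that by simp
    then have "2 powr log 2 (3 * K * T * x) \<le> 2 powr Y" by simp
    then show ?thesis using p by simp
  qed
  have "V \<le> (3 * K * T * x1 + 3 * K * T * x2 + 3 * K * T * x3) / 3" using V(2) by (simp add: algebra_simps)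
  also have "\<dots> \<le> (2 powr Y + 2 powr Y + 2 powr Y) / 3"
    using one[OF pos(3) b(1)] one[OF pos(4) b(2)] one[OF pos(5) b(3)] by simp
  finally have "V \<le> 2 powr Y" by simp
  then show ?thesis
  proof (cases "V = 0")
    case False
    then have "0 < V" using V(1) by simp
    then have "log 2 V \<le> log 2 (2 powr Y)" using \<open>V \<le> 2 powr Y\<close> by (intro log_mono) auto
    then show ?thesis by simp
  qed simp
qed

lemma log_VarN_le:
  fixes lam hh X :: real
  assumes i: "0 < i" "i \<le> n" and m: "real m = lam * real n" and lam: "lam \<le> hh"
    and l: "log 2 (real (card (layer n i))) \<le> real n * hh"
    and T: "log 2 (real (card (Tset n i))) \<le> real n * X"
  shows "VarN m n i = 0 \<or> log 2 (VarN m n i) \<le> log 2 (3 * (16 * 256 ^ 4)) + real n * (X + 2 * hh - 5 * lam)"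
proof -
  define L where "L = real (card (layer n i))"
  have L1: "1 \<le> L" using i by (simp add: L_def card_layer Suc_le_eq)
  have T1: "1 \<le> real (card (Tset n i))" using card_Tset_pos[OF i(2)] by simp
  have "lam * real n \<le> hh * real n" using lam by (simp add: mult_right_mono)
  moreover have "log 2 (L ^ 2 / 2 ^ (5 * m)) = 2 * log 2 L - 5 * real m"
    "log 2 (L / 2 ^ (4 * m)) = log 2 L - 4 * real m" "log 2 (1 / 2 ^ (3 * m)) = - 3 * real m"
    using L1 by (simp_all add: log_divide log_nat_power)
  moreover have "real n * (X + 2 * hh - 5 * lam) = real n * X + 2 * (hh * real n) - 5 * (lam * real n)"
    "real n * hh = hh * real n"
    by (simp_all add: algebra_simps)
  moreover note l T m
  ultimately have log_bounds:
    "log 2 (real (card (Tset n i))) + log 2 (L ^ 2 / 2 ^ (5 * m)) \<le> real n * (X + 2 * hh - 5 * lam)"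
    "log 2 (real (card (Tset n i))) + log 2 (L / 2 ^ (4 * m)) \<le> real n * (X + 2 * hh - 5 * lam)"
    "log 2 (real (card (Tset n i))) + log 2 (1 / 2 ^ (3 * m)) \<le> real n * (X + 2 * hh - 5 * lam)"
    unfolding L_def by linarith+
  show ?thesis
  proof (rule log_le_of_le_sum3)
    show "0 \<le> VarN m n i"
      unfolding VarN_def by (intro divide_nonneg_nonneg sum_nonneg) auto
    show "VarN m n i \<le> 16 * 256 ^ 4 * real (card (Tset n i)) * (L ^ 2 / 2 ^ (5 * m) + L / 2 ^ (4 * m) + 1 / 2 ^ (3 * m))"
      unfolding L_def by (rule VarN_le_Tset[OF i])
  qed (use L1 T1 log_bounds in auto)
qed

lemma real_nat_floor_Ints: "x \<in> \<int> \<Longrightarrow> 0 \<le> x \<Longrightarrow> real (nat \<lfloor>x\<rfloor>) = x"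
  by (metis Ints_cases floor_of_int of_int_0_le_iff of_nat_nat)

lemma eventually_int_seq_scaled:
  assumes "a \<in> S" "0 \<le> a"
  shows "\<forall>\<^sub>F n in int_seq S. real (nat \<lfloor>a * real n\<rfloor>) = a * real n"
  unfolding int_seq_def eventually_inf_principal
  using assms by (intro always_eventually) (auto intro!: real_nat_floor_Ints)

lemma eventually_int_seq_layer_index:
  assumes "\<gamma> \<in> S" "0 < \<gamma>" "\<gamma> \<le> 1/2"
  shows "\<forall>\<^sub>F n in int_seq S. real (nat \<lfloor>\<gamma> * real n\<rfloor>) = \<gamma> * real n
           \<and> 2 \<le> nat \<lfloor>\<gamma> * real n\<rfloor> \<and> nat \<lfloor>\<gamma> * real n\<rfloor> + 2 \<le> n"
proof -
  have "\<forall>\<^sub>F n in sequentially. 8 / \<gamma> \<le> real n"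
    using filterlim_real_sequentially by (simp add: filterlim_at_top)
  then have "\<forall>\<^sub>F n in int_seq S. 8 / \<gamma> \<le> real n"
    by (rule filter_leD[rotated]) (simp add: int_seq_def)
  with eventually_int_seq_scaled[OF assms(1) less_imp_le[OF assms(2)]] show ?thesis
  proof eventually_elim
    case (elim n)
    define k where "k = nat \<lfloor>\<gamma> * real n\<rfloor>"
    have "8 \<le> \<gamma> * real n"
      using elim(2) assms(2) by (simp add: divide_le_eq mult.commute)
    moreover have "\<gamma> * real n \<le> real n / 2"
      using mult_right_mono[OF assms(3), of "real n"] by simp
    moreover have "real k = \<gamma> * real n" using elim(1) by (simp add: k_def)
    ultimately have "real 2 \<le> real k" "real (k + 2) \<le> real n" by simp_all
    then show ?case using elim(1) unfolding k_def[symmetric] of_nat_le_iff by simp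
  qed
qed

lemma log_card_Tset_distinct_bounds:
  assumes "2 \<le> i" "i + 2 \<le> n"
  shows "log 2 (real (card (Tset n i))) - log 2 (1 + 6 * real n ^ 4) \<le> log 2 (real (card (Tset_distinct n i)))"
    "log 2 (real (card (Tset_distinct n i))) \<le> log 2 (real (card (Tset n i)))"
proof -
  note D = card_Tset_le_Tset_distinct[OF assms]
  have "real (card (Tset n i)) \<le> real ((1 + 6 * n ^ 4) * card (Tset_distinct n i))"
    using D(2) by (simp only: of_nat_le_iff)
  then have "real (card (Tset n i)) \<le> (1 + 6 * real n ^ 4) * real (card (Tset_distinct n i))"
    by (simp add: algebra_simps)
  moreover have "0 < real (card (Tset_distinct n i))" using D(1) by simp
  moreover have "0 < real (card (Tset n i))" using card_Tset_pos[of i n] assms by simp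
  ultimately have "log 2 (real (card (Tset n i))) \<le> log 2 ((1 + 6 * real n ^ 4) * real (card (Tset_distinct n i)))"
    by (intro log_mono) auto
  also have "\<dots> = log 2 (1 + 6 * real n ^ 4) + log 2 (real (card (Tset_distinct n i)))"
    using \<open>0 < real (card (Tset_distinct n i))\<close> add_pos_nonneg[of 1 "6 * real n ^ 4"]
    by (simp add: log_mult card_gt_0_iff)
  finally show "log 2 (real (card (Tset n i))) - log 2 (1 + 6 * real n ^ 4) \<le> log 2 (real (card (Tset_distinct n i)))"
    by simp
  show "log 2 (real (card (Tset_distinct n i))) \<le> log 2 (real (card (Tset n i)))"
    using D(1) card_mono[OF finite_Tset Tset_distinct_subset] by (intro log_mono) auto
qed

lemma tendsto_log_card_Tset_distinct:
  assumes "0 < \<gamma>" "\<gamma> \<le> 1/2"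
  shows "((\<lambda>n. log 2 (real (card (Tset_distinct n (nat \<lfloor>\<gamma> * real n\<rfloor>)))) / real n)
           \<longlongrightarrow> psi4 \<gamma> + 2 * h \<gamma>) (int_seq {\<gamma>})"
proof -
  define T where "T n = log 2 (real (card (Tset n (nat \<lfloor>\<gamma> * real n\<rfloor>)))) / real n" for n
  have lim_T: "(T \<longlongrightarrow> psi4 \<gamma> + 2 * h \<gamma>) (int_seq {\<gamma>})"
    unfolding T_def by (rule tendsto_log_card_Tset) (use assms in auto)
  have "((\<lambda>n. log 2 (1 + 6 * real n ^ 4) / real n) \<longlongrightarrow> 0) (int_seq {\<gamma>})"
    by (rule tendsto_mono[OF _ log_poly_over_n_tendsto_0]) (simp add: int_seq_def)
  from tendsto_diff[OF lim_T this]
  have lim_lower: "((\<lambda>n. T n - log 2 (1 + 6 * real n ^ 4) / real n) \<longlongrightarrow> psi4 \<gamma> + 2 * h \<gamma>) (int_seq {\<gamma>})"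
    by simp
  show ?thesis
  proof (rule tendsto_sandwich[OF _ _ lim_lower lim_T])
    show "\<forall>\<^sub>F n in int_seq {\<gamma>}. T n - log 2 (1 + 6 * real n ^ 4) / real n
        \<le> log 2 (real (card (Tset_distinct n (nat \<lfloor>\<gamma> * real n\<rfloor>)))) / real n"
      using eventually_int_seq_layer_index[OF singletonI assms]
      by (auto elim!: eventually_mono simp: T_def diff_divide_distrib[symmetric]
          intro!: divide_right_mono log_card_Tset_distinct_bounds)
    show "\<forall>\<^sub>F n in int_seq {\<gamma>}. log 2 (real (card (Tset_distinct n (nat \<lfloor>\<gamma> * real n\<rfloor>)))) / real n \<le> T n"
      using eventually_int_seq_layer_index[OF singletonI assms]
      by (auto elim!: eventually_mono simp: T_def intro!: divide_right_mono log_card_Tset_distinct_bounds)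
  qed
qed

lemma log_card_Tset_le_entropy:
  assumes "0 < i" "i < n"
  shows "log 2 (real (card (Tset n i))) \<le> 3 * (real n * h (real i / real n))"
proof -
  have "real (card (Tset n i)) \<le> real (card (layer n i) ^ 3)"
    using card_Tset_le_cube by (simp only: of_nat_le_iff)
  then have "log 2 (real (card (Tset n i))) \<le> log 2 (real (card (layer n i)) ^ 3)"
    using card_Tset_pos[of i n] assms by (intro log_mono) auto
  also have "\<dots> = 3 * log 2 (real (n choose i))"
    using assms by (simp add: log_nat_power card_layer)
  also have "\<dots> \<le> 3 * (real n * h (real i / real n))"
    using log_binomial_le_entropy[OF assms] by simp
  finally show ?thesis .
qed

lemma psi4_le_h:
  assumes "0 < \<gamma>" "\<gamma> \<le> 1/2" "int_seq {\<gamma>} \<noteq> bot"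
  shows "psi4 \<gamma> \<le> h \<gamma>"
proof -
  have "\<forall>\<^sub>F n in int_seq {\<gamma>}. log 2 (real (card (Tset n (nat \<lfloor>\<gamma> * real n\<rfloor>)))) / real n \<le> 3 * h \<gamma>"
    using eventually_int_seq_layer_index[OF singletonI assms(1,2)]
  proof (elim eventually_mono conjE)
    fix n assume n: "real (nat \<lfloor>\<gamma> * real n\<rfloor>) = \<gamma> * real n" "2 \<le> nat \<lfloor>\<gamma> * real n\<rfloor>"
      "nat \<lfloor>\<gamma> * real n\<rfloor> + 2 \<le> n"
    then have "log 2 (real (card (Tset n (nat \<lfloor>\<gamma> * real n\<rfloor>)))) \<le> real n * (3 * h \<gamma>)"
      using log_card_Tset_le_entropy[of "nat \<lfloor>\<gamma> * real n\<rfloor>" n] by simp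
    then show "log 2 (real (card (Tset n (nat \<lfloor>\<gamma> * real n\<rfloor>)))) / real n \<le> 3 * h \<gamma>"
      using n by (simp add: divide_le_eq mult.commute)
  qed
  from tendsto_upperbound[OF tendsto_log_card_Tset this assms(3)] assms(1,2)
  show ?thesis by simp
qed

lemma EN_asymptotics:
  fixes lam \<gamma> :: real
  assumes "0 < lam" "0 < \<gamma>" "\<gamma> \<le> 1/2"
  shows "\<forall>\<^sub>F n in int_seq {lam, \<gamma>}. 0 < EN (nat \<lfloor>lam * real n\<rfloor>) n (nat \<lfloor>\<gamma> * real n\<rfloor>)
           \<and> log 2 (EN (nat \<lfloor>lam * real n\<rfloor>) n (nat \<lfloor>\<gamma> * real n\<rfloor>)) / real n
             = log 2 (real (card (Tset_distinct n (nat \<lfloor>\<gamma> * real n\<rfloor>)))) / real n - 3 * lam"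
proof -
  have "\<forall>\<^sub>F n in int_seq {lam, \<gamma>}. real (nat \<lfloor>lam * real n\<rfloor>) = lam * real n"
    using eventually_int_seq_scaled[of lam "{lam, \<gamma>}"] assms(1) by simp
  moreover have "\<forall>\<^sub>F n in int_seq {lam, \<gamma>}. real (nat \<lfloor>\<gamma> * real n\<rfloor>) = \<gamma> * real n
      \<and> 2 \<le> nat \<lfloor>\<gamma> * real n\<rfloor> \<and> nat \<lfloor>\<gamma> * real n\<rfloor> + 2 \<le> n"
    using eventually_int_seq_layer_index[of \<gamma> "{lam, \<gamma>}"] assms(2,3) by simp
  ultimately show ?thesis
  proof eventually_elim
    case (elim n)
    note m = elim(1) and i = elim(2)
    define D where "D = real (card (Tset_distinct n (nat \<lfloor>\<gamma> * real n\<rfloor>)))"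
    have D: "0 < D" using card_Tset_le_Tset_distinct(1)[of "nat \<lfloor>\<gamma> * real n\<rfloor>" n] i by (simp add: D_def)
    have EN: "EN (nat \<lfloor>lam * real n\<rfloor>) n (nat \<lfloor>\<gamma> * real n\<rfloor>) = D / 2 ^ (3 * nat \<lfloor>lam * real n\<rfloor>)"
      using EN_eq[of "nat \<lfloor>\<gamma> * real n\<rfloor>"] i by (simp add: D_def power_mult power_one_over)
    have "log 2 (D / 2 ^ (3 * nat \<lfloor>lam * real n\<rfloor>)) / real n = (log 2 D - 3 * (lam * real n)) / real n"
      using D m by (simp add: log_divide log_nat_power)
    also have "\<dots> = log 2 D / real n - 3 * lam"
      using i by (simp add: diff_divide_distrib)
    finally show ?case
      using D by (simp add: EN D_def)
  qed
qed

text \<open>With \<open>A = \<psi>(4,\<gamma>) + 2h(\<gamma>)\<close> and \<open>\<delta> = \<psi>(4,\<gamma>) - \<lambda>\<close>, the dominant term of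
  \<open>VarN_le\<close> has exponent \<open>A + 2h(\<gamma>) - 5\<lambda> = 2(A - 3\<lambda>) - \<delta>\<close>.\<close>
lemma VarN_asymptotics:
  fixes lam \<gamma> :: real
  assumes "0 < lam" "0 < \<gamma>" "\<gamma> \<le> 1/2" "lam < psi4 \<gamma>"
  shows "\<exists>c>0. \<forall>\<^sub>F n in int_seq {lam, \<gamma>}. VarN (nat \<lfloor>lam * real n\<rfloor>) n (nat \<lfloor>\<gamma> * real n\<rfloor>) = 0
           \<or> log 2 (VarN (nat \<lfloor>lam * real n\<rfloor>) n (nat \<lfloor>\<gamma> * real n\<rfloor>)) / real n
               \<le> 2 * (psi4 \<gamma> + 2 * h \<gamma> - 3 * lam) - c"
proof (cases "int_seq {\<gamma>} = bot")
  case True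
  then have "int_seq {lam, \<gamma>} = bot" using int_seq_mono[of "{\<gamma>}" "{lam, \<gamma>}"] by (simp add: bot_unique)
  then show ?thesis by (intro exI[of _ 1]) simp
next
  case False
  define A where "A = psi4 \<gamma> + 2 * h \<gamma>"
  define \<delta> where "\<delta> = psi4 \<gamma> - lam"
  define K :: real where "K = 3 * (16 * 256 ^ 4)"
  have \<delta>: "0 < \<delta>" using assms(4) by (simp add: \<delta>_def)
  have lam_h: "lam \<le> h \<gamma>" using psi4_le_h[OF assms(2,3) False] assms(4) by simp
  have F: "int_seq {lam, \<gamma>} \<le> int_seq {\<gamma>}" "int_seq {lam, \<gamma>} \<le> sequentially"
    by (simp_all add: int_seq_mono) (simp add: int_seq_def)
  have "\<forall>\<^sub>F n in int_seq {lam, \<gamma>}. log 2 (real (card (Tset n (nat \<lfloor>\<gamma> * real n\<rfloor>)))) / real n < A + \<delta> / 4"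
    using order_tendstoD(2)[OF tendsto_log_card_Tset, of \<gamma> "A + \<delta> / 4"] assms(2,3) \<delta>
    by (auto simp: A_def intro: filter_leD[OF F(1)])
  moreover have "\<forall>\<^sub>F n in int_seq {lam, \<gamma>}. log 2 K / real n < \<delta> / 2"
    using order_tendstoD(2)[OF lim_const_over_n[of "log 2 K"], of "\<delta> / 2"] \<delta>
    by (auto intro: filter_leD[OF F(2)])
  moreover have "\<forall>\<^sub>F n in int_seq {lam, \<gamma>}. real (nat \<lfloor>lam * real n\<rfloor>) = lam * real n"
    using eventually_int_seq_scaled[of lam "{lam, \<gamma>}"] assms(1) by simp
  moreover have "\<forall>\<^sub>F n in int_seq {lam, \<gamma>}. real (nat \<lfloor>\<gamma> * real n\<rfloor>) = \<gamma> * real n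
      \<and> 2 \<le> nat \<lfloor>\<gamma> * real n\<rfloor> \<and> nat \<lfloor>\<gamma> * real n\<rfloor> + 2 \<le> n"
    using eventually_int_seq_layer_index[of \<gamma> "{lam, \<gamma>}"] assms(2,3) by simp
  ultimately have "\<forall>\<^sub>F n in int_seq {lam, \<gamma>}. VarN (nat \<lfloor>lam * real n\<rfloor>) n (nat \<lfloor>\<gamma> * real n\<rfloor>) = 0
           \<or> log 2 (VarN (nat \<lfloor>lam * real n\<rfloor>) n (nat \<lfloor>\<gamma> * real n\<rfloor>)) / real n \<le> 2 * (A - 3 * lam) - \<delta> / 4"
  proof eventually_elim
    case (elim n)
    define m i where "m = nat \<lfloor>lam * real n\<rfloor>" and "i = nat \<lfloor>\<gamma> * real n\<rfloor>"
    have m: "real m = lam * real n" and i: "real i = \<gamma> * real n" "2 \<le> i" "i + 2 \<le> n"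
      using elim(3,4) by (simp_all add: m_def i_def)
    then have n: "0 < real n" by simp
    have "log 2 (real (card (layer n i))) \<le> real n * h \<gamma>"
      using log_binomial_le_entropy[of i n] i n by (simp add: card_layer)
    moreover have "log 2 (real (card (Tset n i))) \<le> real n * (A + \<delta> / 4)"
      using elim(1) n by (simp add: i_def divide_less_eq mult.commute)
    ultimately have "VarN m n i = 0 \<or> log 2 (VarN m n i) \<le> log 2 K + real n * (A + \<delta> / 4 + 2 * h \<gamma> - 5 * lam)"
      using log_VarN_le[of i n m lam "h \<gamma>"] i m lam_h by (simp add: K_def)
    moreover have "x + (A + \<delta> / 4 + 2 * h \<gamma> - 5 * lam) \<le> 2 * (A - 3 * lam) - \<delta> / 4"
      if "x < \<delta> / 2" for x
      using that unfolding A_def \<delta>_def by (simp add: field_simps)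
    then have "log 2 K / real n + (A + \<delta> / 4 + 2 * h \<gamma> - 5 * lam) \<le> 2 * (A - 3 * lam) - \<delta> / 4"
      using elim(2) .
    then have "(log 2 K + real n * (A + \<delta> / 4 + 2 * h \<gamma> - 5 * lam)) / real n
        \<le> 2 * (A - 3 * lam) - \<delta> / 4"
      using n by (simp add: add_divide_distrib)
    ultimately show ?case
      unfolding m_def i_def using n by (auto dest: divide_right_mono[of _ _ "real n"])
  qed
  then show ?thesis
    using \<delta> unfolding A_def by (intro exI[of _ "\<delta> / 4"]) auto
qed

theorem mainTheorem6:
  fixes lam \<gamma> :: real
  assumes "0 < lam" "lam < 1" "0 < \<gamma>" "\<gamma> \<le> 1/2"
  shows "(\<forall>\<^sub>F n in int_seq {lam, \<gamma>}.
            EN (nat \<lfloor>lam * real n\<rfloor>) n (nat \<lfloor>\<gamma> * real n\<rfloor>) > 0)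
       \<and> ((\<lambda>n. \<bar>log 2 (EN (nat \<lfloor>lam * real n\<rfloor>) n (nat \<lfloor>\<gamma> * real n\<rfloor>)) / real n
                 - (psi4 \<gamma> + 2 * h \<gamma> - 3 * lam)\<bar>) \<longlongrightarrow> 0) (int_seq {lam, \<gamma>})
       \<and> (psi4 \<gamma> > lam \<longrightarrow>
            (\<exists>c>0. \<forall>\<^sub>F n in int_seq {lam, \<gamma>}.
               VarN (nat \<lfloor>lam * real n\<rfloor>) n (nat \<lfloor>\<gamma> * real n\<rfloor>) = 0
             \<or> log 2 (VarN (nat \<lfloor>lam * real n\<rfloor>) n (nat \<lfloor>\<gamma> * real n\<rfloor>)) / real n
                 \<le> 2 * (psi4 \<gamma> + 2 * h \<gamma> - 3 * lam) - c))"
proof (intro conjI impI)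
  note EN = EN_asymptotics[OF assms(1,3,4)]
  show "\<forall>\<^sub>F n in int_seq {lam, \<gamma>}. EN (nat \<lfloor>lam * real n\<rfloor>) n (nat \<lfloor>\<gamma> * real n\<rfloor>) > 0"
    using EN by (rule eventually_mono) simp
  have "((\<lambda>n. log 2 (real (card (Tset_distinct n (nat \<lfloor>\<gamma> * real n\<rfloor>)))) / real n - 3 * lam)
      \<longlongrightarrow> psi4 \<gamma> + 2 * h \<gamma> - 3 * lam) (int_seq {lam, \<gamma>})"
    by (intro tendsto_diff tendsto_const tendsto_mono[OF int_seq_mono tendsto_log_card_Tset_distinct])
      (use assms in auto)
  then have "((\<lambda>n. log 2 (EN (nat \<lfloor>lam * real n\<rfloor>) n (nat \<lfloor>\<gamma> * real n\<rfloor>)) / real n)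
      \<longlongrightarrow> psi4 \<gamma> + 2 * h \<gamma> - 3 * lam) (int_seq {lam, \<gamma>})"
    by (rule Lim_transform_eventually) (use EN in \<open>auto elim: eventually_mono\<close>)
  then show "((\<lambda>n. \<bar>log 2 (EN (nat \<lfloor>lam * real n\<rfloor>) n (nat \<lfloor>\<gamma> * real n\<rfloor>)) / real n
      - (psi4 \<gamma> + 2 * h \<gamma> - 3 * lam)\<bar>) \<longlongrightarrow> 0) (int_seq {lam, \<gamma>})"
    by (intro tendsto_rabs_zero LIM_zero)
  show "\<exists>c>0. \<forall>\<^sub>F n in int_seq {lam, \<gamma>}. VarN (nat \<lfloor>lam * real n\<rfloor>) n (nat \<lfloor>\<gamma> * real n\<rfloor>) = 0
      \<or> log 2 (VarN (nat \<lfloor>lam * real n\<rfloor>) n (nat \<lfloor>\<gamma> * real n\<rfloor>)) / real n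
          \<le> 2 * (psi4 \<gamma> + 2 * h \<gamma> - 3 * lam) - c" if "psi4 \<gamma> > lam"
    by (rule VarN_asymptotics) (use assms that in auto)
qed

end
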